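(* Let $t_1,t_2,t_3$ be three distinct tangent lines to $\mathcal O$, and let $P=t_1\cap t_2$, $Q=t_2\cap t_3$, $R=t_1\cap t_3$ (so $\Delta=\{\alpha_P,\alpha_Q,\alpha_R\}$ is a triangle tangent to $\mathcal O$). Then $H=\langle\alpha_P,\alpha_Q,\alpha_R\rangle$ is isomorphic to $\mathrm{PSL}(2,p)$ if $p\equiv 1\pmod 4$, and to $\mathrm{PGL}(2,p)$ if $p\equiv 3\pmod 4$.
   Context: Throughout, $q=p^n$ with $p$ an odd prime and $n\ge 1$; $\pi=\mathrm{PG}(2,q)$ is the Desarguesian projective plane over $\mathbb F_q$ and $\mathcal O$ is a fixed non-degenerate conic of $\pi$. $G$ denotes the group of projectivities of $\pi$ preserving $\mathcal O$, identified with $\mathrm{PGL}(2,q)$. Every involution of $G$ is a perspectivity with a center (a point not on $\mathcal O$), and for every point $X\in\pi\setminus\mathcal O$ there is exactly one involution $\alpha_X\in G$ with center $X$. A line is tangent to $\mathcal O$ if it meets $\mathcal O$ in exactly one point. *)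

theory Defs
  imports "HOL-Analysis.Determinants" "HOL-Algebra.Generated_Groups" "HOL-Computational_Algebra.Primes"
begin

definition msmult :: "'a::field \<Rightarrow> 'a^'n^'m \<Rightarrow> 'a^'n^'m" where
  "msmult c A = (\<chi> i j. c * A$i$j)"

definition vsmult :: "'a::field \<Rightarrow> 'a^'n \<Rightarrow> 'a^'n" where
  "vsmult c v = (\<chi> i. c * v$i)"

definition mcls :: "'a::field^'n^'n \<Rightarrow> ('a^'n^'n) set" where
  "mcls A = {msmult c A | c. c \<noteq> 0}"

definition pgl :: "('a::field^'n^'n) set monoid" where
  "pgl = \<lparr> carrier = {mcls A | A. det A \<noteq> 0},
          mult = (\<lambda>X Y. {A ** B | A B. A \<in> X \<and> B \<in> Y}),
          one = mcls (mat 1) \<rparr>"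

definition psl :: "('a::field^'n^'n) set monoid" where
  "psl = pgl \<lparr> carrier := {mcls A | A. det A = 1} \<rparr>"

definition pcls :: "'a::field^'n \<Rightarrow> ('a^'n) set" where
  "pcls v = {vsmult c v | c. c \<noteq> 0}"

text \<open>Points (and, dually, lines) of PG(2,F) are classes of nonzero vectors.\<close>
definition pg_points :: "('a::field^3) set set" where
  "pg_points = {pcls v | v. v \<noteq> 0}"

definition pg_lines :: "('a::field^3) set set" where
  "pg_lines = {pcls u | u. u \<noteq> 0}"

definition dotp :: "'a::field^'n \<Rightarrow> 'a^'n \<Rightarrow> 'a" where
  "dotp u v = (\<Sum>i\<in>UNIV. u$i * v$i)"

definition on_line :: "('a::field^3) set \<Rightarrow> ('a^3) set \<Rightarrow> bool" where
  "on_line X L \<longleftrightarrow> (\<forall>u\<in>L. \<forall>v\<in>X. dotp u v = 0)"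

definition conic :: "'a::field^3^3 \<Rightarrow> ('a^3) set set" where
  "conic M = {X \<in> pg_points. \<forall>v\<in>X. dotp v (M *v v) = 0}"

definition nondeg_conic_matrix :: "'a::field^3^3 \<Rightarrow> bool" where
  "nondeg_conic_matrix M \<longleftrightarrow> transpose M = M \<and> det M \<noteq> 0"

definition tangent :: "'a::field^3^3 \<Rightarrow> ('a^3) set \<Rightarrow> bool" where
  "tangent M L \<longleftrightarrow> L \<in> pg_lines \<and> card {X \<in> conic M. on_line X L} = 1"

definition papply :: "('a::field^3^3) set \<Rightarrow> ('a^3) set \<Rightarrow> ('a^3) set" where
  "papply g X = {A *v v | A v. A \<in> g \<and> v \<in> X}"

definition conic_group :: "'a::field^3^3 \<Rightarrow> ('a^3^3) set monoid" where
  "conic_group M = pgl \<lparr> carrier := {g \<in> carrier pgl. papply g ` conic M = conic M} \<rparr>"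

definition fixes_line :: "('a::field^3^3) set \<Rightarrow> ('a^3) set \<Rightarrow> bool" where
  "fixes_line g L \<longleftrightarrow>
     papply g ` {X \<in> pg_points. on_line X L} = {X \<in> pg_points. on_line X L}"

definition has_center :: "('a::field^3^3) set \<Rightarrow> ('a^3) set \<Rightarrow> bool" where
  "has_center g X \<longleftrightarrow> X \<in> pg_points \<and> (\<forall>L\<in>pg_lines. on_line X L \<longrightarrow> fixes_line g L)"

text \<open>The (unique) involution of the conic group with center X.\<close>
definition alpha :: "'a::field^3^3 \<Rightarrow> ('a^3) set \<Rightarrow> ('a^3^3) set" where
  "alpha M X = (THE g. g \<in> carrier (conic_group M) \<and> g \<noteq> \<one>\<^bsub>conic_group M\<^esub> \<and>
       g \<otimes>\<^bsub>conic_group M\<^esub> g = \<one>\<^bsub>conic_group M\<^esub> \<and> has_center g X)"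

end

theory Submission
  imports Defs "HOL-Number_Theory.Number_Theory"
begin

text \<open>
  In suitable coordinates the conic is the image of the projective line under the Veronese map
  \<open>(s, t) \<mapsto> (s\<^sup>2, s t, t\<^sup>2)\<close> and the points of contact of the three tangents are the images
  of \<open>(1, 0)\<close>, \<open>(0, 1)\<close>, \<open>(1, -1)\<close>. An involution of the conic group with center a vertex must
  fix the two points of contact on the tangents through that vertex, and this determines it
  uniquely; hence \<open>\<alpha>\<^sub>P, \<alpha>\<^sub>Q, \<alpha>\<^sub>R\<close> are the symmetric squares of three explicit involutions of
  PGL(2,p) \<subseteq> PGL(2,q), and the symmetric square is injective on PGL(2,q). Products of these
  involutions are the unipotent matrices with entry \<open>-2\<close>, whose powers give all unipotents over
  the prime field, so they generate PSL(2,p) up to their own determinant \<open>-1\<close>. That determinant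
  is a square exactly when \<open>p \<equiv> 1 (mod 4)\<close>; otherwise every element of PGL(2,p) has a
  representative with determinant \<open>\<plusminus>\<close>a square, and the group generated is all of PGL(2,p).
\<close>

section \<open>Prime fields\<close>

lemma CHAR_eq_of_card_prime_power:
  assumes "prime p" "CARD('a::{field,finite}) = p ^ n"
  shows "CHAR('a) = p"
proof -
  have "prime CHAR('a)"
    by (rule prime_CHAR_semidom) (simp add: finite_imp_CHAR_pos)
  moreover have "CHAR('a) dvd p ^ n"
    using CHAR_dvd_CARD[where 'a='a] assms(2) by simp
  ultimately show ?thesis
    using assms(1) by (metis prime_dvd_power_nat primes_dvd_imp_eq)
qed

lemma two_neq_zero_if_odd_CHAR:
  assumes "odd CHAR('a::field)"
  shows "(2::'a) \<noteq> 0"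
proof
  assume "(2::'a) = 0"
  then have "CHAR('a) dvd 2"
    using of_nat_eq_0_iff_char_dvd[of 2, where 'a='a] by simp
  then have "CHAR('a) = 1"
    using assms by (metis dvd_antisym dvd_refl odd_two_times_div_two_nat two_is_prime_nat
        prime_nat_iff)
  then show False by simp
qed

context
  fixes p :: nat
  assumes p_prime: "prime p" and card_b: "CARD('b::{field,finite}) = p"
begin

lemma prime_field_CHAR: "CHAR('b) = p"
  using CHAR_eq_of_card_prime_power[of p 1] p_prime card_b by simp

lemma prime_field_of_int_surj: "\<exists>x. b = (of_int x :: 'b)"
proof -
  have "inj_on (\<lambda>x. of_int x :: 'b) {0..<int p}"
    by (rule inj_onI) (simp add: of_int_eq_iff_cong_CHAR prime_field_CHAR cong_def)
  then have "card ((\<lambda>x. of_int x :: 'b) ` {0..<int p}) = CARD('b)"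
    by (simp add: card_image card_b)
  then have "(\<lambda>x. of_int x :: 'b) ` {0..<int p} = UNIV"
    by (simp add: card_subset_eq)
  then show ?thesis by blast
qed

lemma prime_field_nat_multiple:
  assumes "(c::'b) \<noteq> 0"
  shows "\<exists>k::nat. t = of_nat k * c"
proof -
  obtain x where x: "t / c = (of_int x :: 'b)" using prime_field_of_int_surj by blast
  have "(of_int (x mod int p) :: 'b) = of_int x"
    by (simp add: of_int_eq_iff_cong_CHAR prime_field_CHAR cong_def)
  moreover have "x mod int p \<ge> 0" using prime_gt_0_nat[OF p_prime] by simp
  ultimately have "t / c = of_nat (nat (x mod int p))" using x by simp
  then show ?thesis using assms by (metis nonzero_eq_divide_eq)
qed

lemma prime_field_square_iff_QuadRes: "(\<exists>e::'b. e * e = of_int a) \<longleftrightarrow> QuadRes (int p) a"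
proof -
  have "[y\<^sup>2 = a] (mod int p) \<longleftrightarrow> (of_int y :: 'b) * of_int y = of_int a" for y
    using of_int_eq_iff_cong_CHAR[of "y\<^sup>2" a, where 'a='b]
    by (simp add: prime_field_CHAR power2_eq_square)
  then show ?thesis
    unfolding QuadRes_def using prime_field_of_int_surj by metis
qed

lemma prime_field_euler_criterion:
  assumes "odd p" "(d::'b) \<noteq> 0"
  shows "d ^ ((p - 1) div 2) = (if \<exists>e. e * e = d then 1 else -1)"
proof -
  obtain a where a: "d = of_int a" using prime_field_of_int_surj by blast
  have "2 < p" using assms(1) prime_ge_2_nat[OF p_prime] by (cases "p = 2") auto
  then have "[Legendre a (int p) = a ^ ((p - 1) div 2)] (mod int p)"
    using euler_criterion[OF p_prime] by simp
  then have "(of_int (Legendre a (int p)) :: 'b) = d ^ ((p - 1) div 2)"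
    using of_int_eq_iff_cong_CHAR[of "Legendre a (int p)" "a ^ ((p - 1) div 2)", where 'a='b]
    by (simp add: a prime_field_CHAR)
  moreover have "\<not> [a = 0] (mod int p)"
    using assms(2) a of_int_eq_iff_cong_CHAR[of a 0, where 'a='b] by (simp add: prime_field_CHAR)
  ultimately show ?thesis
    by (auto simp add: Legendre_def a prime_field_square_iff_QuadRes split: if_splits)
qed

lemma prime_field_minus_one_square:
  assumes "p mod 4 = 1"
  shows "\<exists>i::'b. i * i = -1"
proof -
  have "odd p" "even ((p - 1) div 2)" using assms by presburger+
  moreover have "(-1::'b) \<noteq> 1"
    using two_neq_zero_if_odd_CHAR[where 'a='b] \<open>odd p\<close> prime_field_CHAR by simp
  ultimately show ?thesis
    using prime_field_euler_criterion[of "-1"] by (cases "\<exists>i::'b. i * i = -1") auto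
qed

lemma prime_field_square_or_minus_square:
  assumes "p mod 4 = 3" "(d::'b) \<noteq> 0"
  shows "(\<exists>e. e * e = d) \<or> (\<exists>e. e * e = - d)"
proof (rule ccontr)
  assume nonsq: "\<not> ?thesis"
  have "odd p" "odd ((p - 1) div 2)" using assms(1) by presburger+
  have "(-1::'b) = (- d) ^ ((p - 1) div 2)"
    using prime_field_euler_criterion[OF \<open>odd p\<close>, of "- d"] nonsq assms(2) by simp
  also have "\<dots> = - (d ^ ((p - 1) div 2))"
    using \<open>odd ((p - 1) div 2)\<close> by (simp add: power_minus_odd)
  also have "\<dots> = 1"
    using prime_field_euler_criterion[OF \<open>odd p\<close> assms(2)] nonsq by simp
  finally show False
    using two_neq_zero_if_odd_CHAR[where 'a='b] \<open>odd p\<close> prime_field_CHAR by simp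
qed

end

section \<open>Projective linear groups\<close>

lemma msmult_nth [simp]: "msmult c A $ i $ j = c * A $ i $ j"
  by (simp add: msmult_def)

lemma msmult_1 [simp]: "msmult 1 A = A"
  by (simp add: vec_eq_iff)

lemma msmult_msmult [simp]: "msmult c (msmult d A) = msmult (c * d) A"
  by (simp add: vec_eq_iff)

lemma msmult_matrix_mult_left: "msmult c A ** B = msmult c (A ** B)"
  by (simp add: vec_eq_iff matrix_matrix_mult_def sum_distrib_left mult.assoc)

lemma msmult_matrix_mult_right: "A ** msmult c B = msmult c (A ** B)"
  by (simp add: vec_eq_iff matrix_matrix_mult_def sum_distrib_left mult.left_commute)

lemma msmult_eq_mat_mult: "msmult c A = mat c ** (A :: 'a::field^'n^'n)"
  by (simp add: vec_eq_iff matrix_matrix_mult_def mat_def if_distrib if_distribR sum.delta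
      cong: if_cong)

lemma det_msmult: "det (msmult c A) = c ^ CARD('n) * det (A :: 'a::field^'n^'n)"
proof -
  have "det (mat c :: 'a^'n^'n) = c ^ CARD('n)"
    by (subst det_diagonal) (auto simp: mat_def)
  then show ?thesis by (simp add: msmult_eq_mat_mult det_mul)
qed

lemma msmult_matrix_vector_mult: "msmult c A *v x = c *s (A *v x)"
  by (simp add: vec_eq_iff matrix_vector_mult_def sum_distrib_left mult.assoc)

lemma matrix_inv_det_nz:
  assumes "det (A::'a::field^'n^'n) \<noteq> 0"
  shows "A ** matrix_inv A = mat 1" "matrix_inv A ** A = mat 1"
proof -
  have "\<exists>A'. A ** A' = mat 1 \<and> A' ** A = mat 1"
    using assms invertible_det_nz unfolding invertible_def by blast
  then have "A ** matrix_inv A = mat 1 \<and> matrix_inv A ** A = mat 1"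
    unfolding matrix_inv_def by (rule someI_ex)
  then show "A ** matrix_inv A = mat 1" "matrix_inv A ** A = mat 1" by auto
qed

lemma det_matrix_inv_nz: "det (A::'a::field^'n^'n) \<noteq> 0 \<Longrightarrow> det (matrix_inv A) \<noteq> 0"
  using matrix_inv_det_nz(1)[of A] det_mul[of A "matrix_inv A"] by auto

lemma matrix_vector_mult_nz:
  assumes "det (A::'a::field^'n^'n) \<noteq> 0" "x \<noteq> 0"
  shows "A *v x \<noteq> 0"
proof
  assume "A *v x = 0"
  moreover have "x = matrix_inv A *v (A *v x)"
    by (simp add: matrix_vector_mul_assoc matrix_inv_det_nz[OF assms(1)])
  ultimately show False using assms(2) by simp
qed

lemma mcls_self: "A \<in> mcls (A::'a::field^'n^'n)"
  unfolding mcls_def by (rule CollectI, rule exI[of _ 1]) simp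

lemma mcls_eq_iff: "mcls A = mcls B \<longleftrightarrow> (\<exists>c. c \<noteq> 0 \<and> A = msmult c (B::'a::field^'n^'n))"
proof
  assume "mcls A = mcls B"
  then have "A \<in> mcls B" using mcls_self by metis
  then show "\<exists>c. c \<noteq> 0 \<and> A = msmult c B" unfolding mcls_def by blast
next
  assume "\<exists>c. c \<noteq> 0 \<and> A = msmult c B"
  then obtain c where c: "c \<noteq> 0" "A = msmult c B" by blast
  show "mcls A = mcls B"
  proof
    show "mcls A \<subseteq> mcls B" unfolding mcls_def using c by auto
    show "mcls B \<subseteq> mcls A" unfolding mcls_def
    proof
      fix X assume "X \<in> {msmult d B |d. d \<noteq> 0}"
      then obtain d where "d \<noteq> 0" "X = msmult d B" by blast
      then have "X = msmult (d / c) A" "d / c \<noteq> 0" using c by auto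
      then show "X \<in> {msmult d A |d. d \<noteq> 0}" by blast
    qed
  qed
qed

lemma mcls_msmult: "c \<noteq> 0 \<Longrightarrow> mcls (msmult c A) = mcls (A::'a::field^'n^'n)"
  using mcls_eq_iff by blast

lemma mult_mcls: "{X ** Y | X Y. X \<in> mcls A \<and> Y \<in> mcls B} = mcls (A ** B :: 'a::field^'n^'n)"
proof
  show "{X ** Y | X Y. X \<in> mcls A \<and> Y \<in> mcls B} \<subseteq> mcls (A ** B)"
    unfolding mcls_def by (auto simp: msmult_matrix_mult_left msmult_matrix_mult_right)
  show "mcls (A ** B) \<subseteq> {X ** Y | X Y. X \<in> mcls A \<and> Y \<in> mcls B}"
  proof
    fix Z assume "Z \<in> mcls (A ** B)"
    then obtain c where "c \<noteq> 0" "Z = msmult c A ** B"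
      unfolding mcls_def by (auto simp: msmult_matrix_mult_left)
    moreover have "msmult c A \<in> mcls A" if "c \<noteq> 0" for c
      using that unfolding mcls_def by blast
    ultimately show "Z \<in> {X ** Y | X Y. X \<in> mcls A \<and> Y \<in> mcls B}"
      using mcls_self by blast
  qed
qed

lemma pgl_mult [simp]: "mcls A \<otimes>\<^bsub>pgl\<^esub> mcls B = mcls (A ** B)"
  by (simp add: pgl_def mult_mcls)

lemma pgl_one [simp]: "\<one>\<^bsub>pgl\<^esub> = mcls (mat 1)"
  by (simp add: pgl_def)

lemma mcls_in_pgl_iff: "mcls A \<in> carrier pgl \<longleftrightarrow> det (A::'a::field^'n^'n) \<noteq> 0"
proof
  assume "mcls A \<in> carrier pgl"
  then obtain B where "mcls A = mcls B" "det B \<noteq> 0" by (auto simp: pgl_def)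
  moreover obtain c where "c \<noteq> 0" "A = msmult c B" using \<open>mcls A = mcls B\<close> mcls_eq_iff by blast
  ultimately show "det A \<noteq> 0" by (simp add: det_msmult)
qed (auto simp: pgl_def)

lemma pgl_carrierE:
  assumes "X \<in> carrier pgl"
  obtains A :: "'a::field^'n^'n" where "X = mcls A" "det A \<noteq> 0"
  using assms by (auto simp: pgl_def)

lemma group_pgl: "group (pgl :: ('a::field^'n^'n) set monoid)"
proof (rule groupI)
  fix X Y :: "('a^'n^'n) set" assume "X \<in> carrier pgl" "Y \<in> carrier pgl"
  then show "X \<otimes>\<^bsub>pgl\<^esub> Y \<in> carrier pgl"
    by (elim pgl_carrierE) (simp add: mcls_in_pgl_iff det_mul)
next
  fix X Y Z :: "('a^'n^'n) set" assume "X \<in> carrier pgl" "Y \<in> carrier pgl" "Z \<in> carrier pgl"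
  then show "X \<otimes>\<^bsub>pgl\<^esub> Y \<otimes>\<^bsub>pgl\<^esub> Z = X \<otimes>\<^bsub>pgl\<^esub> (Y \<otimes>\<^bsub>pgl\<^esub> Z)"
    by (elim pgl_carrierE) (simp add: matrix_mul_assoc)
next
  fix X :: "('a^'n^'n) set" assume "X \<in> carrier pgl"
  then obtain A where A: "X = mcls A" "det A \<noteq> 0" by (rule pgl_carrierE)
  show "\<one>\<^bsub>pgl\<^esub> \<otimes>\<^bsub>pgl\<^esub> X = X" using A by simp
  have "mcls (matrix_inv A) \<in> carrier pgl" "mcls (matrix_inv A) \<otimes>\<^bsub>pgl\<^esub> X = \<one>\<^bsub>pgl\<^esub>"
    using A by (simp_all add: mcls_in_pgl_iff det_matrix_inv_nz matrix_inv_det_nz)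
  then show "\<exists>Y\<in>carrier pgl. Y \<otimes>\<^bsub>pgl\<^esub> X = \<one>\<^bsub>pgl\<^esub>" by blast
qed (simp add: mcls_in_pgl_iff)

lemma pgl_inv: "det (A::'a::field^'n^'n) \<noteq> 0 \<Longrightarrow> inv\<^bsub>pgl\<^esub> (mcls A) = mcls (matrix_inv A)"
  by (rule group.inv_equality[OF group_pgl])
    (simp_all add: mcls_in_pgl_iff det_matrix_inv_nz matrix_inv_det_nz)

lemma inj_hom_image_iso:
  assumes "group (G\<lparr>carrier := S\<rparr>)" "S \<subseteq> carrier G" "h \<in> hom G H" "inj_on h (carrier G)"
  shows "H\<lparr>carrier := h ` S\<rparr> \<cong> G\<lparr>carrier := S\<rparr>"
proof -
  have "h \<in> iso (G\<lparr>carrier := S\<rparr>) (H\<lparr>carrier := h ` S\<rparr>)"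
  proof (rule isoI)
    show "h \<in> hom (G\<lparr>carrier := S\<rparr>) (H\<lparr>carrier := h ` S\<rparr>)"
      using assms(2,3) by (auto simp: hom_def)
    show "bij_betw h (carrier (G\<lparr>carrier := S\<rparr>)) (carrier (H\<lparr>carrier := h ` S\<rparr>))"
      using inj_on_subset[OF assms(4,2)] by (simp add: bij_betw_def)
  qed
  then show ?thesis using group.iso_sym[OF assms(1)] is_isoI by blast
qed

lemma psl_carrier: "carrier psl = {mcls A | A. det (A::'a::field^'n^'n) = 1}"
  by (simp add: psl_def)

lemma psl_subset_pgl: "carrier (psl :: ('a::field^'n^'n) set monoid) \<subseteq> carrier pgl"
  by (auto simp: psl_carrier mcls_in_pgl_iff)

lemma subgroup_psl: "subgroup (carrier psl) (pgl :: ('a::field^'n^'n) set monoid)"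
proof (rule group.subgroupI[OF group_pgl psl_subset_pgl])
  show "carrier (psl :: ('a^'n^'n) set monoid) \<noteq> {}"
    unfolding psl_carrier using det_I by blast
next
  fix X :: "('a^'n^'n) set" assume "X \<in> carrier psl"
  then obtain A where A: "X = mcls A" "det A = 1" by (auto simp: psl_carrier)
  moreover have "det (matrix_inv A) = 1"
    using matrix_inv_det_nz(1)[of A] det_mul[of A "matrix_inv A"] A(2) by simp
  ultimately show "inv\<^bsub>pgl\<^esub> X \<in> carrier psl"
    by (auto simp: psl_carrier pgl_inv)
next
  fix X Y :: "('a^'n^'n) set" assume "X \<in> carrier psl" "Y \<in> carrier psl"
  then show "X \<otimes>\<^bsub>pgl\<^esub> Y \<in> carrier psl"
    by (auto simp: psl_carrier det_mul)
qed

section \<open>Three involutions generating PSL(2,p) or PGL(2,p)\<close>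

definition mat2 :: "'a::field \<Rightarrow> 'a \<Rightarrow> 'a \<Rightarrow> 'a \<Rightarrow> 'a^2^2" where
  "mat2 a b c d = vector [vector [a, b], vector [c, d]]"

lemma mat2_nth [simp]:
  "mat2 a b c d $ 1 $ 1 = a" "mat2 a b c d $ 1 $ 2 = b"
  "mat2 a b c d $ 2 $ 1 = c" "mat2 a b c d $ 2 $ 2 = d"
  by (simp_all add: mat2_def)

lemma mat2_eq_iff: "mat2 a b c d = mat2 a' b' c' d' \<longleftrightarrow> a = a' \<and> b = b' \<and> c = c' \<and> d = d'"
  by (auto simp: vec_eq_iff forall_2 mat2_def)

lemma mat2_cases: obtains a b c d where "(A::'a::field^2^2) = mat2 a b c d"
proof
  show "A = mat2 (A$1$1) (A$1$2) (A$2$1) (A$2$2)" by (simp add: vec_eq_iff forall_2)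
qed

lemma mat2_mult [simp]:
  "mat2 a b c d ** mat2 e f g h = mat2 (a*e + b*g) (a*f + b*h) (c*e + d*g) (c*f + d*h)"
  by (simp add: vec_eq_iff forall_2 matrix_matrix_mult_def sum_2)

lemma mat2_det [simp]: "det (mat2 a b c d) = a * d - b * c"
  by (simp add: det_2)

lemma mat2_msmult [simp]: "msmult k (mat2 a b c d) = mat2 (k*a) (k*b) (k*c) (k*d)"
  by (simp add: vec_eq_iff forall_2)

lemma mat2_one: "mat 1 = mat2 1 0 0 (1::'a::field)"
  by (simp add: vec_eq_iff forall_2 mat_def)

text \<open>Under the Veronese map \<open>(s, t) \<mapsto> (s\<^sup>2, s t, t\<^sup>2)\<close> the points of contact of the tangent
  triangle will be the images of \<open>(1, 0)\<close>, \<open>(0, 1)\<close> and \<open>(1, -1)\<close>; these are the involutions of the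
  projective line fixing two of those three points.\<close>

abbreviation "inv_P \<equiv> mat2 1 0 0 (-1)"
abbreviation "inv_Q \<equiv> mat2 (-1) 0 2 1"
abbreviation "inv_R \<equiv> mat2 1 2 0 (-1)"

definition triangle_gens :: "('a::field^2^2) set set" where
  "triangle_gens = {mcls inv_P, mcls inv_Q, mcls inv_R}"

lemma triangle_gens_subset_pgl: "triangle_gens \<subseteq> carrier pgl"
  by (simp add: triangle_gens_def mcls_in_pgl_iff)

lemma upper_unipotent_multiple_in_generate:
  assumes "mcls (mat2 1 s 0 1) \<in> generate pgl S"
  shows "mcls (mat2 1 (of_nat k * s) 0 1) \<in> generate pgl (S :: ('a::field^2^2) set set)"
proof (induction k)
  case 0 show ?case using generate.one[of pgl S] by (simp add: mat2_one)
next
  case (Suc k)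
  from generate.eng[OF Suc assms] show ?case by (simp add: algebra_simps)
qed

lemma lower_unipotent_multiple_in_generate:
  assumes "mcls (mat2 1 0 s 1) \<in> generate pgl S"
  shows "mcls (mat2 1 0 (of_nat k * s) 1) \<in> generate pgl (S :: ('a::field^2^2) set set)"
proof (induction k)
  case 0 show ?case using generate.one[of pgl S] by (simp add: mat2_one)
next
  case (Suc k)
  from generate.eng[OF Suc assms] show ?case by (simp add: algebra_simps)
qed

lemma SL2_in_closure_of_unipotents:
  assumes upper: "\<And>t. mcls (mat2 1 t 0 1) \<in> G" and lower: "\<And>t. mcls (mat2 1 0 t 1) \<in> G"
    and mult: "\<And>X Y. X \<in> G \<Longrightarrow> Y \<in> G \<Longrightarrow> X \<otimes>\<^bsub>pgl\<^esub> Y \<in> G"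
    and "det (A::'a::field^2^2) = 1"
  shows "mcls A \<in> G"
proof -
  have lower_gap: "mcls (mat2 a b c d) \<in> G" if "a * d - b * c = 1" "c \<noteq> 0" for a b c d
  proof -
    have eq: "mat2 1 ((a - 1) / c) 0 1 ** mat2 1 0 c 1 ** mat2 1 ((d - 1) / c) 0 1 = mat2 a b c d"
      using that by (simp add: mat2_eq_iff field_simps)
    from mult[OF mult[OF upper[of "(a - 1) / c"] lower[of c]] upper[of "(d - 1) / c"]]
    show ?thesis by (simp only: pgl_mult eq)
  qed
  obtain a b c d where A: "A = mat2 a b c d" by (rule mat2_cases)
  with assms(4) have det1: "a * d - b * c = 1" by simp
  show ?thesis
  proof (cases "c = 0")
    case True
    then have "mcls (mat2 a b a (b + d)) \<in> G"
      using lower_gap[of a "b + d" b a] det1 by (force simp: algebra_simps)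
    from mult[OF lower[of "-1"] this] show ?thesis using A True by simp
  qed (use lower_gap det1 A in simp)
qed

lemma psl_subset_generate_triangle_gens:
  assumes multiples: "\<And>t::'a::field. \<exists>k::nat. t = of_nat k * (-2)"
  shows "carrier (psl :: ('a^2^2) set monoid) \<subseteq> generate pgl triangle_gens"
proof
  let ?G = "generate pgl (triangle_gens :: ('a^2^2) set set)"
  have gens: "mcls inv_P \<in> ?G" "mcls inv_Q \<in> ?G" "mcls inv_R \<in> ?G"
    unfolding triangle_gens_def by (auto intro: generate.incl)
  have "mcls (mat2 1 (-2) 0 1) \<in> ?G"
    using generate.eng[OF gens(3) gens(1)] by simp
  then have upper: "mcls (mat2 1 t 0 1) \<in> ?G" for t
    using upper_unipotent_multiple_in_generate multiples[of t] by metis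
  have "mcls (mat2 (-1) 0 2 (-1)) = mcls (mat2 1 0 (-2::'a) 1)"
    by (subst mcls_eq_iff) (rule exI[of _ "-1"], simp)
  then have "mcls (mat2 1 0 (-2) 1) \<in> ?G"
    using generate.eng[OF gens(2) gens(1)] by simp
  then have lower: "mcls (mat2 1 0 t 1) \<in> ?G" for t
    using lower_unipotent_multiple_in_generate multiples[of t] by metis
  fix X assume "X \<in> carrier (psl :: ('a^2^2) set monoid)"
  then obtain A where "X = mcls A" "det A = 1" by (auto simp: psl_carrier)
  then show "X \<in> ?G"
    using SL2_in_closure_of_unipotents[OF upper lower generate.eng] by simp
qed

text \<open>If \<open>-1 = i\<^sup>2\<close>, the generators, of determinant \<open>-1\<close>, rescaled by \<open>i\<close> lie in SL(2).\<close>

lemma generate_triangle_gens_eq_psl: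
  assumes multiples: "\<And>t::'a::field. \<exists>k::nat. t = of_nat k * (-2)"
    and "i * i = (-1::'a)"
  shows "generate pgl (triangle_gens :: ('a^2^2) set set) = carrier psl"
proof
  have "mcls A \<in> carrier psl" if "det A = -1" for A :: "'a^2^2"
  proof -
    have "i \<noteq> 0" using assms(2) by auto
    then have "mcls (msmult i A) = mcls A" by (rule mcls_msmult)
    moreover have "det (msmult i A) = 1"
      using that assms(2) by (simp add: det_msmult power2_eq_square)
    ultimately show ?thesis by (auto simp: psl_carrier)
  qed
  then have "triangle_gens \<subseteq> carrier (psl :: ('a^2^2) set monoid)"
    unfolding triangle_gens_def by simp
  then show "generate pgl (triangle_gens :: ('a^2^2) set set) \<subseteq> carrier psl"
    by (rule group.generate_subgroup_incl[OF group_pgl _ subgroup_psl])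
qed (rule psl_subset_generate_triangle_gens[OF multiples])

lemma generate_triangle_gens_eq_pgl:
  assumes multiples: "\<And>t::'a::field. \<exists>k::nat. t = of_nat k * (-2)"
    and squares: "\<And>d::'a. d \<noteq> 0 \<Longrightarrow> (\<exists>e. e * e = d) \<or> (\<exists>e. e * e = - d)"
  shows "generate pgl (triangle_gens :: ('a^2^2) set set) = carrier pgl"
proof
  let ?G = "generate pgl (triangle_gens :: ('a^2^2) set set)"
  show "?G \<subseteq> carrier pgl"
    by (rule group.generate_incl[OF group_pgl triangle_gens_subset_pgl])
  have square_det: "mcls B \<in> ?G" if "det B = e * e" "e \<noteq> 0" for B :: "'a^2^2" and e
  proof -
    have "mcls (msmult (1 / e) B) = mcls B" using that(2) by (simp add: mcls_msmult)
    moreover have "det (msmult (1 / e) B) = 1"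
      using that by (simp add: det_msmult power2_eq_square)
    ultimately show ?thesis
      using psl_subset_generate_triangle_gens[OF multiples] by (force simp: psl_carrier)
  qed
  show "carrier pgl \<subseteq> ?G"
  proof
    fix X :: "('a^2^2) set" assume "X \<in> carrier pgl"
    then obtain A where A: "X = mcls A" "det A \<noteq> 0" by (rule pgl_carrierE)
    from squares[OF A(2)] show "X \<in> ?G"
    proof (elim disjE exE)
      fix e assume "e * e = det A"
      with A show ?thesis using square_det[of A e] by (metis mult_zero_left)
    next
      fix e assume e: "e * e = - det A"
      then have "mcls (inv_P ** A) \<in> ?G"
        using square_det[of "inv_P ** A" e] A(2) by (force simp: det_mul)
      moreover have "mcls inv_P \<in> ?G"
        unfolding triangle_gens_def by (auto intro: generate.incl)
      ultimately have "mcls (inv_P ** (inv_P ** A)) \<in> ?G"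
        using generate.eng by fastforce
      moreover have "inv_P ** (inv_P ** A) = A"
        by (simp add: matrix_mul_assoc flip: mat2_one)
      ultimately show ?thesis using A by simp
    qed
  qed
qed

section \<open>The symmetric square embedding of PGL(2,p) into PGL(3,q)\<close>

definition mat3 :: "'a::field \<Rightarrow> 'a \<Rightarrow> 'a \<Rightarrow> 'a \<Rightarrow> 'a \<Rightarrow> 'a \<Rightarrow> 'a \<Rightarrow> 'a \<Rightarrow> 'a \<Rightarrow> 'a^3^3" where
  "mat3 a b c d e f g h i = vector [vector [a, b, c], vector [d, e, f], vector [g, h, i]]"

lemma mat3_nth [simp]:
  "mat3 a b c d e f g h i $ 1 $ 1 = a" "mat3 a b c d e f g h i $ 1 $ 2 = b"
  "mat3 a b c d e f g h i $ 1 $ 3 = c" "mat3 a b c d e f g h i $ 2 $ 1 = d"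
  "mat3 a b c d e f g h i $ 2 $ 2 = e" "mat3 a b c d e f g h i $ 2 $ 3 = f"
  "mat3 a b c d e f g h i $ 3 $ 1 = g" "mat3 a b c d e f g h i $ 3 $ 2 = h"
  "mat3 a b c d e f g h i $ 3 $ 3 = i"
  by (simp_all add: mat3_def)

lemma mat3_eq_iff: "mat3 a b c d e f g h i = mat3 a' b' c' d' e' f' g' h' i' \<longleftrightarrow>
    a = a' \<and> b = b' \<and> c = c' \<and> d = d' \<and> e = e' \<and> f = f' \<and> g = g' \<and> h = h' \<and> i = i'"
  by (auto simp: vec_eq_iff forall_3 mat3_def)

lemma mat3_mult [simp]: "mat3 a b c d e f g h i ** mat3 a' b' c' d' e' f' g' h' i' =
  mat3 (a*a' + b*d' + c*g') (a*b' + b*e' + c*h') (a*c' + b*f' + c*i')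
       (d*a' + e*d' + f*g') (d*b' + e*e' + f*h') (d*c' + e*f' + f*i')
       (g*a' + h*d' + i*g') (g*b' + h*e' + i*h') (g*c' + h*f' + i*i')"
  by (simp add: vec_eq_iff forall_3 matrix_matrix_mult_def sum_3)

lemma mat3_msmult [simp]:
  "msmult k (mat3 a b c d e f g h i) = mat3 (k*a) (k*b) (k*c) (k*d) (k*e) (k*f) (k*g) (k*h) (k*i)"
  by (simp add: vec_eq_iff forall_3)

lemma mat3_det: "det (mat3 a b c d e f g h i) = a*e*i + b*f*g + c*d*h - a*f*h - b*d*i - c*e*g"
  by (simp add: det_3)

lemma mat3_one: "mat 1 = mat3 1 0 0 0 1 0 0 0 (1::'a::field)"
  by (simp add: vec_eq_iff forall_3 mat_def)

lemma mat3_matrix_vector_mult: "mat3 a b c d e f g h i *v vector [x, y, z] =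
    vector [a*x + b*y + c*z, d*x + e*y + f*z, g*x + h*y + i*z]"
  by (simp add: vec_eq_iff forall_3 matrix_vector_mult_def sum_3 mat3_def)

text \<open>The action of a 2\<times>2 matrix on binary quadratic forms, in the coordinates
  \<open>(s\<^sup>2, s t, t\<^sup>2)\<close> of the Veronese embedding of the projective line as a conic.\<close>

definition sym_square :: "'a::field^2^2 \<Rightarrow> 'a^3^3" where
  "sym_square A = (let a = A$1$1; b = A$1$2; c = A$2$1; d = A$2$2 in
     mat3 (a*a) (2*a*b) (b*b) (a*c) (a*d + b*c) (b*d) (c*c) (2*c*d) (d*d))"

lemma sym_square_mat2:
  "sym_square (mat2 a b c d) = mat3 (a*a) (2*a*b) (b*b) (a*c) (a*d + b*c) (b*d) (c*c) (2*c*d) (d*d)"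
  by (simp add: sym_square_def)

lemma sym_square_mult: "sym_square (A ** B) = sym_square A ** sym_square B"
proof -
  obtain a b c d where A: "A = mat2 a b c d" by (rule mat2_cases)
  obtain e f g h where B: "B = mat2 e f g h" by (rule mat2_cases)
  show ?thesis unfolding A B by (simp add: sym_square_mat2 mat3_eq_iff) (simp add: algebra_simps)
qed

lemma sym_square_msmult: "sym_square (msmult k A) = msmult (k * k) (sym_square A)"
proof -
  obtain a b c d where A: "A = mat2 a b c d" by (rule mat2_cases)
  show ?thesis unfolding A by (simp add: sym_square_mat2 mat3_eq_iff) (simp add: algebra_simps)
qed

lemma sym_square_one: "sym_square (mat 1) = (mat 1 :: 'a::field^3^3)"
  by (simp add: mat2_one mat3_one sym_square_mat2)

lemma det_sym_square: "det (sym_square A) = det A ^ 3"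
proof -
  obtain a b c d where A: "A = mat2 a b c d" by (rule mat2_cases)
  show ?thesis unfolding A by (simp add: sym_square_mat2 mat3_det) (simp add: algebra_simps power3_eq_cube)
qed

lemma sym_square_eq_scalar:
  assumes "sym_square N = msmult f (mat 1)" "f \<noteq> 0"
  shows "\<exists>n. N = msmult n (mat 1 :: 'a::field^2^2)"
proof -
  obtain a b c d where N: "N = mat2 a b c d" by (rule mat2_cases)
  have e: "a * a = f" "b * b = 0" "c * c = 0" "a * d + b * c = f"
    using assms(1) unfolding N by (auto simp: sym_square_mat2 mat3_one mat3_eq_iff)
  then have "b = 0" "c = 0" "a * d = a * a" "a \<noteq> 0" using assms(2) by auto
  then show ?thesis using N by (intro exI[of _ a]) (simp add: mat2_one)
qed

text \<open>Only scalar matrices have scalar symmetric squares; multiplying by the adjugate of \<open>B\<close>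
  reduces the general case to this one.\<close>

lemma sym_square_eq_msmult_imp:
  assumes "sym_square A = msmult e (sym_square B)" "e \<noteq> 0" "det B \<noteq> (0::'a::field)"
  shows "\<exists>c. A = msmult c B"
proof -
  obtain a b c d where B: "B = mat2 a b c d" by (rule mat2_cases)
  define adj where "adj = mat2 d (-b) (-c) a"
  have adj: "B ** adj = msmult (det B) (mat 1)" "adj ** B = msmult (det B) (mat 1)"
    unfolding B adj_def by (simp_all add: mat2_one algebra_simps)
  have "sym_square (A ** adj) = msmult e (sym_square (B ** adj))"
    using assms(1) by (simp add: sym_square_mult msmult_matrix_mult_left)
  also have "\<dots> = msmult (e * (det B * det B)) (mat 1)"
    by (simp add: adj sym_square_msmult sym_square_one)
  finally obtain n where n: "A ** adj = msmult n (mat 1)"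
    using sym_square_eq_scalar assms(2,3) by (metis mult_eq_0_iff)
  have "msmult (det B) A = A ** (adj ** B)" by (simp add: adj msmult_matrix_mult_right)
  also have "\<dots> = msmult n B" by (simp add: matrix_mul_assoc n msmult_matrix_mult_left)
  finally have "A = msmult (n / det B) B"
    using assms(3) by (metis msmult_1 msmult_msmult divide_inverse mult.commute right_inverse)
  then show ?thesis by blast
qed

text \<open>The prime subfield of a field of characteristic \<open>p\<close> is identified with a given field of
  order \<open>p\<close> by sending the class of an integer to that integer.\<close>

definition prime_emb :: "'b::field \<Rightarrow> 'a::field" where
  "prime_emb b = of_int (SOME x. b = of_int x)"

locale prime_subfield =
  fixes p :: nat and ta :: "'a::field itself" and tb :: "'b::{field,finite} itself"
  assumes CHAR_a: "CHAR('a) = p" and card_b: "CARD('b) = p"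
begin

lemma prime_p: "prime p"
  using prime_CHAR_semidom[where 'a='a] CHAR_a card_b finite_UNIV_card_ge_0[where 'a='b] by simp

lemma CHAR_b: "CHAR('b) = p"
  using prime_field_CHAR[OF prime_p card_b] .

lemma of_int_b_surj: "\<exists>x. b = (of_int x :: 'b)"
  using prime_field_of_int_surj[OF prime_p card_b] .

lemma prime_emb_of_int [simp]: "(prime_emb (of_int x :: 'b) :: 'a) = of_int x"
proof -
  have "(of_int x :: 'b) = of_int (SOME y. (of_int x :: 'b) = of_int y)"
    by (rule someI_ex) blast
  then show ?thesis
    unfolding prime_emb_def by (simp add: of_int_eq_iff_cong_CHAR CHAR_a CHAR_b cong_sym_eq)
qed

lemma prime_emb_add [simp]: "(prime_emb (x + y :: 'b) :: 'a) = prime_emb x + prime_emb y"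
  using of_int_b_surj[of x] of_int_b_surj[of y] by (metis prime_emb_of_int of_int_add)

lemma prime_emb_mult [simp]: "(prime_emb (x * y :: 'b) :: 'a) = prime_emb x * prime_emb y"
  using of_int_b_surj[of x] of_int_b_surj[of y] by (metis prime_emb_of_int of_int_mult)

lemma prime_emb_minus [simp]: "(prime_emb (- x :: 'b) :: 'a) = - prime_emb x"
  using of_int_b_surj[of x] by (metis prime_emb_of_int of_int_minus)

lemma prime_emb_diff [simp]: "(prime_emb (x - y :: 'b) :: 'a) = prime_emb x - prime_emb y"
  using of_int_b_surj[of x] of_int_b_surj[of y] by (metis prime_emb_of_int of_int_diff)

lemma prime_emb_numeral [simp]: "(prime_emb (numeral k :: 'b) :: 'a) = numeral k"
  using prime_emb_of_int[of "numeral k"] by simp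

lemma prime_emb_0 [simp]: "(prime_emb (0::'b) :: 'a) = 0"
  using prime_emb_of_int[of 0] by simp

lemma prime_emb_1 [simp]: "(prime_emb (1::'b) :: 'a) = 1"
  using prime_emb_of_int[of 1] by simp

lemma prime_emb_eq_iff [simp]: "(prime_emb x :: 'a) = prime_emb (y::'b) \<longleftrightarrow> x = y"
proof -
  obtain u v where "x = of_int u" "y = of_int v" using of_int_b_surj by metis
  then show ?thesis by (simp add: of_int_eq_iff_cong_CHAR CHAR_a CHAR_b)
qed

lemma prime_emb_eq_0_iff [simp]: "(prime_emb x :: 'a) = 0 \<longleftrightarrow> (x::'b) = 0"
  using prime_emb_eq_iff[of x 0] by simp

lemma prime_emb_divide [simp]: "(prime_emb (x / y :: 'b) :: 'a) = prime_emb x / prime_emb y"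
proof (cases "y = 0")
  case False
  then have "(prime_emb (x / y) :: 'a) * prime_emb y = prime_emb x"
    by (simp flip: prime_emb_mult)
  then show ?thesis using False by (simp add: eq_divide_eq)
qed simp

end

definition emb_mat2 :: "'b::field^2^2 \<Rightarrow> 'a::field^2^2" where
  "emb_mat2 A = mat2 (prime_emb (A$1$1)) (prime_emb (A$1$2)) (prime_emb (A$2$1)) (prime_emb (A$2$2))"

text \<open>The arbitrary choice of a representative is harmless by \<open>pgl2_embedding_mcls\<close>.\<close>

definition sym_conj :: "'a::field^3^3 \<Rightarrow> 'b::field^2^2 \<Rightarrow> 'a^3^3" where
  "sym_conj Cm A = Cm ** sym_square (emb_mat2 A) ** matrix_inv Cm"

definition pgl2_embedding :: "'a::field^3^3 \<Rightarrow> ('b::field^2^2) set \<Rightarrow> ('a^3^3) set" where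
  "pgl2_embedding Cm X = mcls (sym_conj Cm (SOME A. A \<in> X))"

context prime_subfield
begin

lemma emb_mat2_mat2 [simp]:
  "(emb_mat2 (mat2 a b c d :: 'b^2^2) :: 'a^2^2) = mat2 (prime_emb a) (prime_emb b) (prime_emb c) (prime_emb d)"
  by (simp add: emb_mat2_def)

lemma emb_mat2_mult: "(emb_mat2 (A ** B :: 'b^2^2) :: 'a^2^2) = emb_mat2 A ** emb_mat2 B"
proof -
  obtain a b c d where A: "A = mat2 a b c d" by (rule mat2_cases)
  obtain e f g h where B: "B = mat2 e f g h" by (rule mat2_cases)
  show ?thesis unfolding A B by simp
qed

lemma emb_mat2_msmult: "(emb_mat2 (msmult k A :: 'b^2^2) :: 'a^2^2) = msmult (prime_emb k) (emb_mat2 A)"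
proof -
  obtain a b c d where A: "A = mat2 a b c d" by (rule mat2_cases)
  show ?thesis unfolding A by simp
qed

lemma det_emb_mat2: "det (emb_mat2 (A :: 'b^2^2) :: 'a^2^2) = prime_emb (det A)"
proof -
  obtain a b c d where A: "A = mat2 a b c d" by (rule mat2_cases)
  show ?thesis unfolding A by simp
qed

lemma emb_mat2_nth: "(emb_mat2 (A :: 'b^2^2) :: 'a^2^2) $ i $ j = prime_emb (A $ i $ j)"
  using exhaust_2[of i] exhaust_2[of j] by (auto simp: emb_mat2_def)

lemma emb_mat2_eq_msmult_imp:
  assumes "(emb_mat2 A :: 'a^2^2) = msmult e (emb_mat2 B)" "det (A::'b^2^2) \<noteq> 0" "det (B::'b^2^2) \<noteq> 0"
  shows "\<exists>c. c \<noteq> 0 \<and> A = msmult c B"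
proof -
  have "B \<noteq> 0" using assms(3) by (auto simp: det_2)
  then obtain j k where jk: "B $ j $ k \<noteq> 0" by (metis vec_eq_iff zero_index)
  define d where "d = A $ j $ k / B $ j $ k"
  have entry: "(prime_emb (A $ i $ l) :: 'a) = e * prime_emb (B $ i $ l)" for i l
    using arg_cong[OF assms(1), of "\<lambda>M. M $ i $ l"] by (simp add: emb_mat2_nth)
  then have "e = (prime_emb d :: 'a)" using jk by (simp add: d_def field_simps)
  then have "A $ i $ l = d * B $ i $ l" for i l
    using entry[of i l] prime_emb_eq_iff[of "A $ i $ l" "d * B $ i $ l"] by simp
  then have AB: "A = msmult d B" by (simp add: vec_eq_iff)
  then have "d \<noteq> 0" using assms(2) by (auto simp: det_msmult)
  then show ?thesis using AB by blast
qed

context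
  fixes Cm :: "'a^3^3"
  assumes det_Cm: "det Cm \<noteq> 0"
begin

lemma sym_conj_msmult:
  "sym_conj Cm (msmult c A :: 'b^2^2) = msmult (prime_emb c * prime_emb c) (sym_conj Cm A)"
  by (simp add: sym_conj_def emb_mat2_msmult sym_square_msmult msmult_matrix_mult_left
      msmult_matrix_mult_right)

lemma pgl2_embedding_mcls: "pgl2_embedding Cm (mcls (A::'b^2^2)) = mcls (sym_conj Cm A)"
proof -
  have "(SOME A'. A' \<in> mcls A) \<in> mcls A" by (rule someI_ex) (use mcls_self in blast)
  then obtain c where "c \<noteq> 0" "(SOME A'. A' \<in> mcls A) = msmult c A" unfolding mcls_def by blast
  then show ?thesis by (simp add: pgl2_embedding_def sym_conj_msmult mcls_msmult)
qed

lemma sym_conj_mult: "sym_conj Cm (A ** B :: 'b^2^2) = sym_conj Cm A ** sym_conj Cm B"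
proof -
  have "sym_conj Cm A ** sym_conj Cm B =
      Cm ** sym_square (emb_mat2 A) ** (matrix_inv Cm ** Cm) ** sym_square (emb_mat2 B) ** matrix_inv Cm"
    unfolding sym_conj_def by (simp add: matrix_mul_assoc)
  then show ?thesis
    by (simp add: sym_conj_def emb_mat2_mult sym_square_mult matrix_inv_det_nz[OF det_Cm]
        matrix_mul_assoc)
qed

lemma sym_conj_apply: "sym_conj Cm A *v (Cm *v w) = Cm *v (sym_square (emb_mat2 A) *v w)"
proof -
  have "sym_conj Cm A *v (Cm *v w) = Cm *v (sym_square (emb_mat2 A) *v ((matrix_inv Cm ** Cm) *v w))"
    by (simp add: sym_conj_def matrix_vector_mul_assoc matrix_mul_assoc)
  then show ?thesis by (simp add: matrix_inv_det_nz[OF det_Cm])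
qed

lemma det_sym_conj_nz: "det (A::'b^2^2) \<noteq> 0 \<Longrightarrow> det (sym_conj Cm A) \<noteq> 0"
  using det_Cm det_matrix_inv_nz[OF det_Cm] by (simp add: sym_conj_def det_mul det_sym_square det_emb_mat2)

lemma pgl2_embedding_hom:
  "pgl2_embedding Cm \<in> hom (pgl :: ('b^2^2) set monoid) (pgl :: ('a^3^3) set monoid)"
proof (rule homI)
  fix X :: "('b^2^2) set" assume "X \<in> carrier pgl"
  then show "pgl2_embedding Cm X \<in> carrier pgl"
    by (elim pgl_carrierE) (simp add: pgl2_embedding_mcls det_sym_conj_nz mcls_in_pgl_iff)
next
  fix X Y :: "('b^2^2) set" assume "X \<in> carrier pgl" "Y \<in> carrier pgl"
  then show "pgl2_embedding Cm (X \<otimes>\<^bsub>pgl\<^esub> Y) = pgl2_embedding Cm X \<otimes>\<^bsub>pgl\<^esub> pgl2_embedding Cm Y"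
    by (elim pgl_carrierE) (simp add: pgl2_embedding_mcls sym_conj_mult)
qed

lemma pgl2_embedding_inj: "inj_on (pgl2_embedding Cm) (carrier (pgl :: ('b^2^2) set monoid))"
proof (rule inj_onI)
  fix X Y :: "('b^2^2) set"
  assume "X \<in> carrier pgl" "Y \<in> carrier pgl" and eq: "pgl2_embedding Cm X = pgl2_embedding Cm Y"
  then obtain A B where A: "X = mcls A" "det A \<noteq> 0" and B: "Y = mcls B" "det B \<noteq> 0"
    by (metis pgl_carrierE)
  then obtain e where e: "e \<noteq> 0" "sym_conj Cm A = msmult e (sym_conj Cm B)"
    using eq mcls_eq_iff by (metis pgl2_embedding_mcls)
  have unconj: "matrix_inv Cm ** (Cm ** N ** matrix_inv Cm) ** Cm = N" for N :: "'a^3^3"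
    by (simp add: matrix_mul_assoc matrix_inv_det_nz[OF det_Cm])
      (simp flip: matrix_mul_assoc add: matrix_inv_det_nz[OF det_Cm])
  have "sym_square (emb_mat2 A) = msmult e (sym_square (emb_mat2 B) :: 'a^3^3)"
    using arg_cong[OF e(2), of "\<lambda>N. matrix_inv Cm ** N ** Cm"]
    by (simp add: sym_conj_def unconj msmult_matrix_mult_left msmult_matrix_mult_right)
  then obtain c where "(emb_mat2 A :: 'a^2^2) = msmult c (emb_mat2 B)"
    using sym_square_eq_msmult_imp e(1) B(2) det_emb_mat2[of B] by force
  then show "X = Y"
    using emb_mat2_eq_msmult_imp A B by (auto simp: mcls_eq_iff)
qed

lemma pgl2_embedding_subgroup_iso:
  assumes "subgroup S (pgl :: ('b^2^2) set monoid)"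
  shows "(pgl :: ('a^3^3) set monoid)\<lparr>carrier := pgl2_embedding Cm ` S\<rparr> \<cong> pgl\<lparr>carrier := S\<rparr>"
  using inj_hom_image_iso subgroup.subgroup_is_group[OF assms group_pgl] subgroup.subset[OF assms]
    pgl2_embedding_hom pgl2_embedding_inj by blast

end

end

section \<open>Bilinear forms and the cross product\<close>

lemma vsmult_eq_scaleR [simp]: "vsmult c v = c *s v"
  by (simp add: vsmult_def vector_scalar_mult_def)

lemma dotp_sym: "dotp u v = dotp v (u::'a::field^'n)"
  by (simp add: dotp_def mult.commute)

lemma dotp_add_left [simp]: "dotp (u + w) v = dotp u v + dotp w (v::'a::field^'n)"
  by (simp add: dotp_def sum.distrib algebra_simps)

lemma dotp_add_right [simp]: "dotp v (u + w) = dotp v u + dotp v (w::'a::field^'n)"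
  by (simp add: dotp_def sum.distrib algebra_simps)

lemma dotp_diff_left [simp]: "dotp (u - w) v = dotp u v - dotp w (v::'a::field^'n)"
  by (simp add: dotp_def sum_subtractf algebra_simps)

lemma dotp_diff_right [simp]: "dotp v (u - w) = dotp v u - dotp v (w::'a::field^'n)"
  by (simp add: dotp_def sum_subtractf algebra_simps)

lemma dotp_smult_left [simp]: "dotp (c *s u) v = c * dotp u (v::'a::field^'n)"
  by (simp add: dotp_def sum_distrib_left algebra_simps)

lemma dotp_smult_right [simp]: "dotp v (c *s u) = c * dotp v (u::'a::field^'n)"
  by (simp add: dotp_def sum_distrib_left algebra_simps)

lemma dotp_neg_left [simp]: "dotp (- u) v = - dotp u (v::'a::field^'n)"
  by (simp add: dotp_def sum_negf)

lemma dotp_neg_right [simp]: "dotp v (- u) = - dotp v (u::'a::field^'n)"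
  by (simp add: dotp_def sum_negf)

lemma dotp_zero [simp]: "dotp 0 v = 0" "dotp v 0 = (0::'a::field)"
  by (simp_all add: dotp_def)

lemma dotp_axis [simp]: "dotp x (axis i 1) = (x::'a::field^'n) $ i"
  by (simp add: dotp_def axis_def if_distrib if_distribR cong: if_cong)

declare matrix_vector_right_distrib [simp] matrix_vector_mult_diff_distrib [simp]

lemma matrix_vector_mult_smult [simp]: "M *v (c *s x) = c *s (M *v (x::'a::field^'n))"
  by (simp add: matrix_vector_mult_def vec_eq_iff sum_distrib_left algebra_simps)

lemma matrix_vector_mult_uminus [simp]: "M *v (- x) = - (M *v (x::'a::field^'n))"
  by (simp add: matrix_vector_mult_def vec_eq_iff sum_negf)

lemma dotp_matrix_vector_mult: "dotp x (M *v y) = dotp (transpose M *v x) (y::'a::field^'n)"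
  unfolding dotp_def matrix_vector_mult_def transpose_def
  by (simp add: sum_distrib_left sum_distrib_right algebra_simps) (rule sum.swap)

definition bform :: "'a::field^3^3 \<Rightarrow> 'a^3 \<Rightarrow> 'a^3 \<Rightarrow> 'a" where
  "bform M x y = dotp x (M *v y)"

lemma bform_add_left [simp]: "bform M (x + y) z = bform M x z + bform M y z"
  by (simp add: bform_def)

lemma bform_add_right [simp]: "bform M z (x + y) = bform M z x + bform M z y"
  by (simp add: bform_def)

lemma bform_diff_left [simp]: "bform M (x - y) z = bform M x z - bform M y z"
  by (simp add: bform_def)

lemma bform_diff_right [simp]: "bform M z (x - y) = bform M z x - bform M z y"
  by (simp add: bform_def)

lemma bform_smult_left [simp]: "bform M (c *s x) z = c * bform M x z"
  by (simp add: bform_def)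

lemma bform_smult_right [simp]: "bform M z (c *s x) = c * bform M z x"
  by (simp add: bform_def)

lemma bform_neg_left [simp]: "bform M (- x) z = - bform M x z"
  by (simp add: bform_def)

lemma bform_neg_right [simp]: "bform M z (- x) = - bform M z x"
  by (simp add: bform_def)

lemma bform_zero [simp]: "bform M 0 z = 0" "bform M z 0 = 0"
  by (simp_all add: bform_def)

lemma bform_sym: "transpose M = M \<Longrightarrow> bform M x y = bform M y x"
  unfolding bform_def using dotp_matrix_vector_mult[of x M y] by (simp add: dotp_sym)

lemma dotp_matrix_vector_mult_sym: "transpose M = M \<Longrightarrow> dotp (M *v x) y = bform M x y"
  unfolding bform_def using dotp_matrix_vector_mult[of x M y] by (simp add: dotp_sym)

definition cross :: "'a::field^3 \<Rightarrow> 'a^3 \<Rightarrow> 'a^3" where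
  "cross u v = vector [u$2 * v$3 - u$3 * v$2, u$3 * v$1 - u$1 * v$3, u$1 * v$2 - u$2 * v$1]"

lemma dotp_3: "dotp (u::'a::field^3) v = u$1 * v$1 + u$2 * v$2 + u$3 * v$3"
  by (simp add: dotp_def sum_3)

lemma cross_nth:
  "cross u v $ 1 = u$2 * v$3 - u$3 * v$2"
  "cross u v $ 2 = u$3 * v$1 - u$1 * v$3"
  "cross u v $ 3 = u$1 * v$2 - u$2 * v$1"
  by (simp_all add: cross_def)

lemma dotp_cross [simp]:
  "dotp u (cross u v) = 0" "dotp v (cross u v) = 0" "dotp (cross u v) u = 0" "dotp (cross u v) v = 0"
  by (simp_all add: dotp_3 cross_nth algebra_simps)

lemma cross_antisym: "cross u v = - cross v u"
  by (simp add: vec_eq_iff forall_3 cross_nth)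

lemma cross_add_right [simp]: "cross u (v + w) = cross u v + cross u w"
  by (simp add: vec_eq_iff forall_3 cross_nth algebra_simps)

lemma dotp_cross_swap: "dotp m (cross u e) = dotp (cross m u) e"
  by (simp add: dotp_3 cross_nth algebra_simps)

lemma cross_cross: "cross (cross u u') w = dotp u w *s u' - dotp u' w *s u"
  by (simp add: vec_eq_iff forall_3 cross_nth dotp_3 algebra_simps)

lemma cross_eq_0_imp_multiple:
  assumes "cross u v = 0" "v \<noteq> (0::'a::field^3)"
  shows "\<exists>c. u = c *s v"
proof -
  have e: "u$2 * v$3 = u$3 * v$2" "u$3 * v$1 = u$1 * v$3" "u$1 * v$2 = u$2 * v$1"
    using assms(1) by (simp_all add: vec_eq_iff forall_3 cross_nth)
  obtain k where k: "v $ k \<noteq> 0" using assms(2) by (metis vec_eq_iff zero_index)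
  have r: "u $ i * v $ k = u $ k * v $ i" for i
    using exhaust_3[of i] exhaust_3[of k] by (elim disjE) (simp_all, (metis e)+)
  have "u $ i = (u$k / v$k) * v $ i" for i
  proof -
    have "u $ i = (u $ i * v $ k) / v $ k" using k by simp
    also have "\<dots> = (u$k / v$k) * v$i" using r[of i] by simp
    finally show ?thesis .
  qed
  then have "\<exists>c. \<forall>i. u $ i = c * v $ i" by blast
  then show ?thesis by (auto simp: vec_eq_iff)
qed

lemma orthogonal_both_imp_cross_multiple:
  assumes "dotp u w = 0" "dotp u' w = 0" "cross u u' \<noteq> (0::'a::field^3)"
  shows "\<exists>c. w = c *s cross u u'"
proof -
  have "cross (cross u u') w = 0" using assms by (simp add: cross_cross dotp_sym)
  then have "cross w (cross u u') = 0" by (metis cross_antisym neg_equal_0_iff_equal)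
  then show ?thesis using cross_eq_0_imp_multiple assms(3) by blast
qed

lemma vector_smult_right_cancel: "c *s a = d *s a \<Longrightarrow> a \<noteq> (0::'a::field^'n) \<Longrightarrow> c = d"
  by (metis vector_sub_rdistrib eq_iff_diff_eq_0 vector_mul_eq_0)

definition col3 :: "'a::field^3 \<Rightarrow> 'a^3 \<Rightarrow> 'a^3 \<Rightarrow> 'a^3^3" where
  "col3 x y z = (\<chi> i j. (if j = 1 then x else if j = 2 then y else z) $ i)"

lemma col3_nth: "col3 x y z $ i $ 1 = x $ i" "col3 x y z $ i $ 2 = y $ i" "col3 x y z $ i $ 3 = z $ i"
  by (simp_all add: col3_def)

lemma col3_matrix_vector_mult: "col3 x y z *v vector [p, q, r] = p *s x + q *s y + r *s z"
  by (simp add: vec_eq_iff forall_3 matrix_vector_mult_def sum_3 col3_nth algebra_simps)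

lemma matrix_eq_on_basis:
  assumes "det (col3 x y z) \<noteq> 0" "A *v x = B *v x" "A *v y = B *v y" "A *v z = B *v (z::'a::field^3)"
  shows "A = B"
proof -
  have "A ** col3 x y z = B ** col3 x y z"
    using assms(2-4) by (simp add: vec_eq_iff forall_3 matrix_matrix_mult_def matrix_vector_mult_def col3_nth)
  then have "A ** col3 x y z ** matrix_inv (col3 x y z) = B ** col3 x y z ** matrix_inv (col3 x y z)"
    by simp
  then show ?thesis by (simp flip: matrix_mul_assoc add: matrix_inv_det_nz[OF assms(1)])
qed

lemma transpose_col3_matrix_vector_mult:
  "transpose (col3 x y z) *v w = vector [dotp x w, dotp y w, dotp z w]"
  by (simp add: vec_eq_iff forall_3 matrix_vector_mult_def sum_3 col3_nth transpose_def dotp_3)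

lemma gram_matrix_col3: "transpose (col3 x y z) ** M ** col3 x y z =
  mat3 (bform M x x) (bform M x y) (bform M x z) (bform M y x) (bform M y y) (bform M y z)
       (bform M z x) (bform M z y) (bform M z z)"
proof -
  have entry: "(transpose T ** M ** T) $ i $ j =
      dotp (\<chi> k. T $ k $ i) (M *v (\<chi> k. T $ k $ j))" for T :: "'a^3^3" and i j
    unfolding matrix_matrix_mult_def matrix_vector_mult_def transpose_def dotp_def
    by (simp add: sum_distrib_left sum_distrib_right mult.assoc) (rule sum.swap)
  have cols: "(\<chi> k. col3 x y z $ k $ 1) = x" "(\<chi> k. col3 x y z $ k $ 2) = y"
    "(\<chi> k. col3 x y z $ k $ 3) = z"
    by (simp_all add: vec_eq_iff col3_nth)
  show ?thesis by (simp add: vec_eq_iff forall_3 entry cols bform_def)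
qed

lemma det_col3_nz_of_gram:
  "det (mat3 (bform M x x) (bform M x y) (bform M x z) (bform M y x) (bform M y y) (bform M y z)
      (bform M z x) (bform M z y) (bform M z z)) \<noteq> 0 \<Longrightarrow> det (col3 x y z) \<noteq> 0"
  by (simp flip: gram_matrix_col3 add: det_mul)

lemma pcls_self: "v \<in> pcls (v::'a::field^'n)"
  unfolding pcls_def by (rule CollectI, rule exI[of _ 1]) simp

lemma pcls_eq_iff: "pcls u = pcls v \<longleftrightarrow> (\<exists>c. c \<noteq> 0 \<and> u = c *s (v::'a::field^'n))"
proof
  assume "pcls u = pcls v"
  then have "u \<in> pcls v" using pcls_self by metis
  then show "\<exists>c. c \<noteq> 0 \<and> u = c *s v" unfolding pcls_def by auto
next
  assume "\<exists>c. c \<noteq> 0 \<and> u = c *s v"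
  then obtain c where c: "c \<noteq> 0" "u = c *s v" by blast
  show "pcls u = pcls v"
  proof
    show "pcls u \<subseteq> pcls v" unfolding pcls_def using c by auto
    show "pcls v \<subseteq> pcls u" unfolding pcls_def
    proof
      fix X assume "X \<in> {vsmult d v |d. d \<noteq> 0}"
      then obtain d where "d \<noteq> 0" "X = d *s v" by auto
      then have "X = (d / c) *s u" "d / c \<noteq> 0" using c by auto
      then show "X \<in> {vsmult d u |d. d \<noteq> 0}" by auto
    qed
  qed
qed

lemma pcls_smult: "c \<noteq> 0 \<Longrightarrow> pcls (c *s v) = pcls (v::'a::field^'n)"
  using pcls_eq_iff by blast

lemma pg_points_iff: "X \<in> pg_points \<longleftrightarrow> (\<exists>v. v \<noteq> 0 \<and> X = pcls v)"
  by (auto simp: pg_points_def)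

lemma pg_lines_iff: "L \<in> pg_lines \<longleftrightarrow> (\<exists>v. v \<noteq> 0 \<and> L = pcls v)"
  by (auto simp: pg_lines_def)

lemma pcls_in_pg_points: "v \<noteq> 0 \<Longrightarrow> pcls v \<in> pg_points"
  by (auto simp: pg_points_def)

lemma pcls_in_pg_lines: "v \<noteq> 0 \<Longrightarrow> pcls v \<in> pg_lines"
  by (auto simp: pg_lines_def)

lemma on_line_pcls: "on_line (pcls x) (pcls u) \<longleftrightarrow> dotp u x = 0"
proof
  assume "on_line (pcls x) (pcls u)"
  then show "dotp u x = 0" unfolding on_line_def using pcls_self[of u] pcls_self[of x] by blast
qed (auto simp: on_line_def pcls_def)

lemma pcls_in_conic_iff: "v \<noteq> 0 \<Longrightarrow> pcls v \<in> conic M \<longleftrightarrow> bform M v v = 0"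
proof
  assume "v \<noteq> 0" "pcls v \<in> conic M"
  then show "bform M v v = 0" unfolding conic_def bform_def using pcls_self[of v] by blast
next
  assume "v \<noteq> 0" "bform M v v = 0"
  then show "pcls v \<in> conic M" unfolding conic_def using pcls_in_pg_points[of v]
    by (auto simp: pcls_def bform_def[symmetric])
qed

lemma papply_pcls: "papply (mcls A) (pcls v) = pcls (A *v v)"
proof
  show "papply (mcls A) (pcls v) \<subseteq> pcls (A *v v)"
    unfolding papply_def mcls_def pcls_def by (auto simp: msmult_matrix_vector_mult)
  show "pcls (A *v v) \<subseteq> papply (mcls A) (pcls v)"
  proof
    fix X assume "X \<in> pcls (A *v v)"
    then obtain c where c: "c \<noteq> 0" "X = msmult c A *v v"
      unfolding pcls_def by (auto simp: msmult_matrix_vector_mult)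
    moreover have "msmult c A \<in> mcls A" using c unfolding mcls_def by auto
    ultimately show "X \<in> papply (mcls A) (pcls v)" unfolding papply_def using pcls_self by blast
  qed
qed

lemma has_center_on_line:
  assumes "has_center g X" "L \<in> pg_lines" "on_line X L" "Y \<in> pg_points" "on_line Y L"
  shows "on_line (papply g Y) L"
  using assms unfolding has_center_def fixes_line_def by blast

lemma conic_group_carrier:
  "g \<in> carrier (conic_group M) \<longleftrightarrow> g \<in> carrier pgl \<and> papply g ` conic M = conic M"
  by (simp add: conic_group_def)

lemma conic_group_one [simp]: "\<one>\<^bsub>conic_group M\<^esub> = mcls (mat 1)"
  by (simp add: conic_group_def)

lemma conic_group_mult [simp]: "g \<otimes>\<^bsub>conic_group M\<^esub> h = g \<otimes>\<^bsub>pgl\<^esub> h"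
  by (simp add: conic_group_def)

definition central_involution :: "'a::field^3^3 \<Rightarrow> ('a^3^3) set \<Rightarrow> ('a^3) set \<Rightarrow> bool" where
  "central_involution M g X \<longleftrightarrow> g \<in> carrier (conic_group M) \<and> g \<noteq> mcls (mat 1) \<and>
     g \<otimes>\<^bsub>pgl\<^esub> g = mcls (mat 1) \<and> has_center g X"

lemma alpha_eq_The: "alpha M X = (THE g. central_involution M g X)"
  by (simp add: alpha_def central_involution_def)

section \<open>Central involutions of a conic\<close>

definition polar_tangent :: "'a::field^3^3 \<Rightarrow> 'a^3 \<Rightarrow> bool" where
  "polar_tangent M x \<longleftrightarrow> (\<forall>X\<in>conic M. on_line X (pcls (M *v x)) \<longrightarrow> X = pcls x)"

lemma polar_tangent_smult: "c \<noteq> 0 \<Longrightarrow> polar_tangent M x \<Longrightarrow> polar_tangent M (c *s x)"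
  by (simp add: polar_tangent_def pcls_smult)

lemma rank_one_update_apply:
  "(\<chi> i j. (if i = j then 1 else 0) + c * v $ i * m $ j) *v x = x + (c * dotp m x) *s (v::'a::field^'n)"
proof -
  have "((\<chi> i j. (if i = j then 1 else 0) + c * v $ i * m $ j) *v x) $ i = x $ i + (c * dotp m x) * v $ i"
    for i
  proof -
    have "((\<chi> i j. (if i = j then 1 else 0) + c * v $ i * m $ j) *v x) $ i =
        (\<Sum>j\<in>UNIV. (if i = j then 1 else 0) * x $ j) + (\<Sum>j\<in>UNIV. (c * v $ i) * (m $ j * x $ j))"
      unfolding matrix_vector_mult_def by (simp add: sum.distrib[symmetric] distrib_right mult.assoc)
    also have "\<dots> = x $ i + (\<Sum>j\<in>UNIV. (c * v $ i) * (m $ j * x $ j))"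
      by (simp add: if_distribR if_distrib[of "\<lambda>y. y * _"] cong: if_cong)
    also have "\<dots> = x $ i + (c * v $ i) * dotp m x"
      by (simp add: dotp_def sum_distrib_left)
    finally show ?thesis by simp
  qed
  then show ?thesis by (simp add: vec_eq_iff)
qed

lemma involution_image_eq: "(\<And>X. X \<in> S \<Longrightarrow> f X \<in> S \<and> f (f X) = X) \<Longrightarrow> f ` S = S"
  by (metis (no_types, lifting) image_eqI image_subsetI subsetI subset_antisym)

text \<open>The harmonic homology with center \<open>v\<close> and axis the polar line of \<open>v\<close>:
  \<open>x \<mapsto> x - 2 B(v, x) / B(v, v) v\<close>.\<close>

definition reflection :: "'a::field^3^3 \<Rightarrow> 'a^3 \<Rightarrow> 'a^3^3" where
  "reflection M v = (\<chi> i j. (if i = j then 1 else 0) + (- (2 / bform M v v)) * v $ i * (M *v v) $ j)"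

locale nondeg_conic =
  fixes M :: "'a::field^3^3"
  assumes nondeg: "nondeg_conic_matrix M" and two_nz: "(2::'a) \<noteq> 0"
begin

lemma M_symmetric: "transpose M = M"
  using nondeg by (simp add: nondeg_conic_matrix_def)

lemma det_M_nz: "det M \<noteq> 0"
  using nondeg by (simp add: nondeg_conic_matrix_def)

lemma bform_commute: "bform M x y = bform M y x"
  using bform_sym[OF M_symmetric] .

lemma dotp_polar: "dotp (M *v x) y = bform M x y"
  using dotp_matrix_vector_mult_sym[OF M_symmetric] .

lemma polar_nz: "v \<noteq> 0 \<Longrightarrow> M *v v \<noteq> 0"
  using matrix_vector_mult_nz[OF det_M_nz] .

lemma on_polar_iff: "on_line (pcls x) (pcls (M *v a)) \<longleftrightarrow> bform M a x = 0"
  by (simp add: on_line_pcls dotp_polar)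

lemma polar_cross_nz:
  assumes "y \<noteq> 0" "bform M y y = 0" "bform M x y \<noteq> 0"
  shows "cross (M *v x) (M *v y) \<noteq> 0"
proof
  assume "cross (M *v x) (M *v y) = 0"
  then obtain c where "M *v x = c *s (M *v y)"
    using cross_eq_0_imp_multiple polar_nz[OF assms(1)] by blast
  then have "M *v (x - c *s y) = 0" by simp
  then have "x = c *s y" using matrix_vector_mult_nz[OF det_M_nz, of "x - c *s y"] by auto
  then show False using assms(2,3) by simp
qed

text \<open>A line through a conic point \<open>a\<close> other than its polar meets the conic again, namely at
  \<open>B(d, d) a - 2 B(a, d) d\<close> for any point \<open>d\<close> of the line off the polar of \<open>a\<close>.\<close>

lemma second_conic_point_on_line:
  assumes "bform M a a = 0" "dotp u a = 0" "cross (M *v a) u \<noteq> 0"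
  obtains y where "y \<noteq> 0" "bform M y y = 0" "dotp u y = 0" "bform M a y \<noteq> 0"
proof -
  obtain i where i: "cross (M *v a) u $ i \<noteq> 0" using assms(3) by (metis vec_eq_iff zero_index)
  define d where "d = cross u (axis i 1)"
  have "dotp (M *v a) d = cross (M *v a) u $ i" by (simp add: d_def dotp_cross_swap)
  then have ad: "bform M a d \<noteq> 0" using i by (simp add: dotp_polar)
  define y where "y = bform M d d *s a + (- (2 * bform M a d)) *s d"
  have "bform M a y \<noteq> 0" using assms(1) two_nz ad by (simp add: y_def)
  moreover from this have "y \<noteq> 0" by auto
  moreover have "bform M y y = 0" using assms(1) by (simp add: y_def bform_commute[of d a])
  moreover have "dotp u y = 0" using assms(2) by (simp add: y_def d_def)
  ultimately show ?thesis using that by blast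
qed

lemma tangent_eq_polar:
  assumes "tangent M t"
  obtains a where "a \<noteq> 0" "bform M a a = 0" "t = pcls (M *v a)" "polar_tangent M a"
proof -
  obtain X0 where X0: "{X \<in> conic M. on_line X t} = {X0}"
    using assms unfolding tangent_def by (meson card_1_singletonE)
  then have "X0 \<in> pg_points" by (auto simp: conic_def)
  then obtain a where a: "a \<noteq> 0" "X0 = pcls a" using pg_points_iff by blast
  have aa: "bform M a a = 0" using pcls_in_conic_iff[OF a(1)] X0 a(2) by auto
  obtain u where u: "u \<noteq> 0" "t = pcls u" using assms pg_lines_iff by (auto simp: tangent_def)
  have "on_line (pcls a) (pcls u)" using X0 a u by blast
  then have ua: "dotp u a = 0" by (simp add: on_line_pcls)
  have only_a: "\<forall>X\<in>conic M. on_line X t \<longrightarrow> X = pcls a" using X0 a by auto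
  have "t = pcls (M *v a)"
  proof (cases "cross (M *v a) u = 0")
    case True
    then obtain c where c: "M *v a = c *s u" using cross_eq_0_imp_multiple u(1) by blast
    then have "c \<noteq> 0" using polar_nz[OF a(1)] by auto
    then show ?thesis using c u(2) pcls_smult by metis
  next
    case False
    then obtain y where y: "y \<noteq> 0" "bform M y y = 0" "dotp u y = 0" "bform M a y \<noteq> 0"
      using second_conic_point_on_line[OF aa ua] by blast
    then have "pcls y = pcls a"
      using only_a pcls_in_conic_iff[OF y(1)] u(2) by (simp add: on_line_pcls)
    then obtain c where "y = c *s a" using pcls_eq_iff by blast
    then show ?thesis using y(4) aa by simp
  qed
  with a aa only_a show ?thesis using that by (simp add: polar_tangent_def)
qed

lemma polar_tangent_bform_nz:
  assumes "x \<noteq> 0" "y \<noteq> 0" "bform M y y = 0" "polar_tangent M x" "pcls (M *v x) \<noteq> pcls (M *v y)"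
  shows "bform M x y \<noteq> 0"
proof
  assume "bform M x y = 0"
  then have "pcls y = pcls x"
    using assms(2-4) by (simp add: polar_tangent_def on_polar_iff pcls_in_conic_iff)
  then obtain c where "c \<noteq> 0" "y = c *s x" using pcls_eq_iff by blast
  then show False using assms(5) by (simp add: pcls_smult)
qed

lemma point_on_two_polars:
  assumes "P \<in> pg_points" "on_line P (pcls (M *v x))" "on_line P (pcls (M *v y))"
    "cross (M *v x) (M *v y) \<noteq> 0" "v \<noteq> 0" "bform M x v = 0" "bform M y v = 0"
  shows "P = pcls v"
proof -
  obtain w where w: "w \<noteq> 0" "P = pcls w" using assms(1) pg_points_iff by blast
  have "dotp (M *v x) w = 0" "dotp (M *v y) w = 0" using assms(2,3) w(2) by (simp_all add: on_line_pcls)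
  then obtain s where s: "w = s *s cross (M *v x) (M *v y)"
    using orthogonal_both_imp_cross_multiple assms(4) by blast
  have "dotp (M *v x) v = 0" "dotp (M *v y) v = 0" using assms(6,7) by (simp_all add: dotp_polar)
  then obtain s' where s': "v = s' *s cross (M *v x) (M *v y)"
    using orthogonal_both_imp_cross_multiple assms(4) by blast
  have "s \<noteq> 0" "s' \<noteq> 0" using s s' w(1) assms(5) by auto
  then have "w = (s / s') *s v" "s / s' \<noteq> 0" using s s' by (simp_all add: vector_smult_assoc)
  then show ?thesis using w(2) by (simp add: pcls_smult)
qed

lemma reflection_apply: "reflection M v *v x = x + (- (2 / bform M v v) * bform M v x) *s v"
  unfolding reflection_def rank_one_update_apply by (simp add: dotp_polar)

context
  fixes v :: "'a^3"
  assumes vv: "bform M v v \<noteq> 0"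
begin

lemma reflection_involutive: "reflection M v *v (reflection M v *v x) = x"
  using vv by (simp add: reflection_apply bform_commute[of x v]) (simp add: vec_eq_iff field_simps)

lemma reflection_square: "reflection M v ** reflection M v = mat 1"
  by (simp add: matrix_eq flip: matrix_vector_mul_assoc add: reflection_involutive)

lemma det_reflection_nz: "det (reflection M v) \<noteq> 0"
  using arg_cong[OF reflection_square, of det] by (auto simp: det_mul)

lemma reflection_preserves_conic: "papply (mcls (reflection M v)) ` conic M = conic M"
proof (rule involution_image_eq)
  fix X assume "X \<in> conic M"
  then obtain x where x: "x \<noteq> 0" "X = pcls x" "bform M x x = 0"
    using pcls_in_conic_iff by (auto simp: conic_def pg_points_iff)
  have "bform M (reflection M v *v x) (reflection M v *v x) = bform M x x"
    using vv by (simp add: reflection_apply bform_commute[of x v])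
  then have "pcls (reflection M v *v x) \<in> conic M"
    using pcls_in_conic_iff[OF matrix_vector_mult_nz[OF det_reflection_nz x(1)]] x(3) by simp
  then show "papply (mcls (reflection M v)) X \<in> conic M \<and>
      papply (mcls (reflection M v)) (papply (mcls (reflection M v)) X) = X"
    using x by (simp add: papply_pcls reflection_involutive)
qed

lemma reflection_has_center:
  assumes "v \<noteq> 0"
  shows "has_center (mcls (reflection M v)) (pcls v)"
  unfolding has_center_def fixes_line_def
proof (intro conjI ballI impI)
  show "pcls v \<in> pg_points" using assms by (rule pcls_in_pg_points)
  fix L assume "L \<in> pg_lines" "on_line (pcls v) L"
  then obtain u where u: "L = pcls u" "dotp u v = 0" using pg_lines_iff on_line_pcls by metis
  show "papply (mcls (reflection M v)) ` {X \<in> pg_points. on_line X L} = {X \<in> pg_points. on_line X L}"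
  proof (rule involution_image_eq)
    fix X assume "X \<in> {X \<in> pg_points. on_line X L}"
    then obtain x where x: "x \<noteq> 0" "X = pcls x" "dotp u x = 0"
      using u on_line_pcls by (auto simp: pg_points_iff)
    moreover have "dotp u (reflection M v *v x) = dotp u x"
      using u(2) by (simp add: reflection_apply)
    ultimately show "papply (mcls (reflection M v)) X \<in> {X \<in> pg_points. on_line X L} \<and>
        papply (mcls (reflection M v)) (papply (mcls (reflection M v)) X) = X"
      using u matrix_vector_mult_nz[OF det_reflection_nz x(1)]
      by (simp add: papply_pcls reflection_involutive pcls_in_pg_points on_line_pcls)
  qed
qed

lemma reflection_central_involution:
  assumes "a \<noteq> 0" "bform M v a = 0" "v \<noteq> 0"
  shows "central_involution M (mcls (reflection M v)) (pcls v)"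
  unfolding central_involution_def
proof (intro conjI)
  show "mcls (reflection M v) \<in> carrier (conic_group M)"
    using det_reflection_nz reflection_preserves_conic by (simp add: conic_group_carrier mcls_in_pgl_iff)
  show "mcls (reflection M v) \<otimes>\<^bsub>pgl\<^esub> mcls (reflection M v) = mcls (mat 1)"
    by (simp add: reflection_square)
  show "has_center (mcls (reflection M v)) (pcls v)" using reflection_has_center assms(3) .
  show "mcls (reflection M v) \<noteq> mcls (mat 1)"
  proof
    assume "mcls (reflection M v) = mcls (mat 1)"
    then obtain c where c: "reflection M v = msmult c (mat 1)" unfolding mcls_eq_iff by blast
    have "reflection M v *v a = a" using assms(2) by (simp add: reflection_apply)
    then have "1 *s a = c *s a" using c by (simp add: msmult_matrix_vector_mult)
    then have "c = 1" using vector_smult_right_cancel assms(1) by metis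
    have "reflection M v *v v = - v" using vv by (simp add: reflection_apply vec_eq_iff field_simps)
    then have "(- 1) *s v = c *s v" using c by (simp add: msmult_matrix_vector_mult)
    then have "c = -1" using vector_smult_right_cancel assms(3) by metis
    then show False using \<open>c = 1\<close> two_nz by simp
  qed
qed

end

lemma central_involution_eigenvector_contact:
  assumes g: "central_involution M (mcls B) (pcls v)"
    and x: "x \<noteq> 0" "bform M x x = 0" "bform M x v = 0" "polar_tangent M x"
  shows "\<exists>l. B *v x = l *s x"
proof -
  have center: "has_center (mcls B) (pcls v)" using g by (simp add: central_involution_def)
  have "on_line (pcls v) (pcls (M *v x))" "on_line (pcls x) (pcls (M *v x))"
    using x(2,3) by (simp_all add: on_polar_iff)
  then have "on_line (papply (mcls B) (pcls x)) (pcls (M *v x))"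
    by (rule has_center_on_line[OF center pcls_in_pg_lines[OF polar_nz[OF x(1)]] _
          pcls_in_pg_points[OF x(1)]])
  moreover have "papply (mcls B) (pcls x) \<in> conic M"
    using g pcls_in_conic_iff[OF x(1)] x(2) by (auto simp: central_involution_def conic_group_carrier)
  ultimately have "pcls (B *v x) = pcls x"
    using x(4) by (simp add: polar_tangent_def papply_pcls)
  then show ?thesis using pcls_eq_iff by blast
qed

lemma central_involution_eigenvector_center:
  assumes g: "central_involution M (mcls B) (pcls v)" and "v \<noteq> 0"
    and "a \<noteq> 0" "b \<noteq> 0" "cross (M *v a) (M *v b) \<noteq> 0" "bform M a v = 0" "bform M b v = 0"
  shows "\<exists>l. B *v v = l *s v"
proof -
  have center: "has_center (mcls B) (pcls v)" using g by (simp add: central_involution_def)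
  have "on_line (papply (mcls B) (pcls v)) (pcls (M *v x))" if "x \<noteq> 0" "bform M x v = 0" for x
    using has_center_on_line[OF center pcls_in_pg_lines[OF polar_nz[OF that(1)]]]
      pcls_in_pg_points[OF \<open>v \<noteq> 0\<close>] that(2)
    by (simp add: on_polar_iff)
  then have "dotp (M *v a) (B *v v) = 0" "dotp (M *v b) (B *v v) = 0"
    using assms(3-7) by (simp_all add: papply_pcls on_line_pcls)
  then obtain s where s: "B *v v = s *s cross (M *v a) (M *v b)"
    using orthogonal_both_imp_cross_multiple assms(5) by blast
  have "dotp (M *v a) v = 0" "dotp (M *v b) v = 0" using assms(6,7) by (simp_all add: dotp_polar)
  then obtain s' where s': "v = s' *s cross (M *v a) (M *v b)"
    using orthogonal_both_imp_cross_multiple assms(5) by blast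
  then have "s' \<noteq> 0" using \<open>v \<noteq> 0\<close> by auto
  then have "B *v v = (s / s') *s v" using s s' by (simp add: vector_smult_assoc)
  then show ?thesis by blast
qed

text \<open>The configuration at a vertex \<open>v\<close> of the tangent triangle: \<open>a\<close> and \<open>b\<close> are the points of
  contact of the two tangents through \<open>v\<close>, normalised so that \<open>v = a + b - c\<close> for the third
  point of contact \<open>c\<close>, whence \<open>B(v, v) = -2k\<close>.\<close>

context
  fixes a b v :: "'a^3" and k :: 'a
  assumes a0: "a \<noteq> 0" and b0: "b \<noteq> 0" and aa: "bform M a a = 0" and bb: "bform M b b = 0"
    and ab: "bform M a b = k" and k0: "k \<noteq> 0" and av: "bform M a v = 0" and bv: "bform M b v = 0"
    and vv: "bform M v v = - 2 * k"
    and tan_a: "polar_tangent M a" and tan_b: "polar_tangent M b"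
begin

lemma vertex_nz: "v \<noteq> 0"
  using vv two_nz k0 by auto

lemma det_vertex_frame: "det (col3 a b v) \<noteq> 0"
  by (rule det_col3_nz_of_gram[of M])
    (use two_nz k0 in \<open>simp add: mat3_det aa bb ab av bv vv bform_commute[of b a]
       bform_commute[of v a] bform_commute[of v b]\<close>)

lemma dotp_cross_vertex_nz: "dotp (cross v (a + b)) a \<noteq> 0"
proof
  assume "dotp (cross v (a + b)) a = 0"
  then have "dotp a (cross v b) = 0" by (simp add: dotp_sym)
  then have "vector [dotp a (cross v b), dotp b (cross v b), dotp v (cross v b)] = (0::'a^3)"
    by (simp add: vec_eq_iff forall_3)
  then have "transpose (col3 a b v) *v cross v b = 0"
    by (simp only: transpose_col3_matrix_vector_mult)
  then have "cross v b = 0"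
    using matrix_vector_mult_nz[of "transpose (col3 a b v)" "cross v b"] det_vertex_frame by auto
  then obtain c where "v = c *s b" using cross_eq_0_imp_multiple b0 by blast
  then have "v = 0" using av ab k0 by simp
  then show False using vertex_nz by simp
qed

text \<open>The line through \<open>v\<close> and \<open>a + b\<close> is fixed, which forces equal eigenvalues at \<open>a\<close> and \<open>b\<close>.\<close>

lemma central_involution_equal_eigenvalues:
  assumes g: "central_involution M (mcls B) (pcls v)" and "B *v a = la *s a" "B *v b = lb *s b"
  shows "la = lb"
proof -
  define u where "u = cross v (a + b)"
  have ua: "dotp u a \<noteq> 0" using dotp_cross_vertex_nz u_def by simp
  have "bform M a (a + b) = k" using aa ab by simp
  then have ab0: "a + b \<noteq> 0" using k0 by (metis bform_zero(2))
  have "on_line (pcls v) (pcls u)" "on_line (pcls (a + b)) (pcls u)"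
    by (simp_all only: on_line_pcls u_def dotp_cross)
  moreover have "has_center (mcls B) (pcls v)" using g by (simp add: central_involution_def)
  moreover have "u \<noteq> 0" using ua by auto
  ultimately have "on_line (papply (mcls B) (pcls (a + b))) (pcls u)"
    using has_center_on_line pcls_in_pg_lines pcls_in_pg_points[OF ab0] by blast
  then have "la * dotp u a + lb * dotp u b = 0" using assms(2,3) by (simp add: papply_pcls on_line_pcls)
  moreover have "dotp u (a + b) = 0" by (simp only: u_def dotp_cross)
  then have "dotp u a + dotp u b = 0" by simp
  then have "dotp u b = - dotp u a" by (simp add: eq_neg_iff_add_eq_0 add.commute)
  ultimately have "(la - lb) * dotp u a = 0" by (simp add: algebra_simps)
  then show ?thesis using ua by simp
qed

lemma central_involution_vertex_matrix:
  assumes g: "central_involution M g (pcls v)"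
  obtains B l where "g = mcls B" "l \<noteq> 0" "B *v a = l *s a" "B *v b = l *s b" "B *v v = (- l) *s v"
proof -
  have "g \<in> carrier pgl" using g by (simp add: central_involution_def conic_group_carrier)
  then obtain B where B: "g = mcls B" "det B \<noteq> 0" by (rule pgl_carrierE)
  note gB = g[unfolded B(1)]
  obtain la where la: "B *v a = la *s a"
    using central_involution_eigenvector_contact[OF gB a0 aa av tan_a] by blast
  obtain lb where lb: "B *v b = lb *s b"
    using central_involution_eigenvector_contact[OF gB b0 bb bv tan_b] by blast
  obtain lv where lv: "B *v v = lv *s v"
    using central_involution_eigenvector_center[OF gB vertex_nz a0 b0 polar_cross_nz[OF b0 bb] av bv]
      ab k0 by blast
  have lab: "la = lb" using central_involution_equal_eigenvalues[OF gB la lb] .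
  have "mcls (B ** B) = mcls (mat 1)" using gB by (simp add: central_involution_def)
  then obtain c where c: "B ** B = msmult c (mat 1)" using mcls_eq_iff by blast
  have "(B ** B) *v a = (la * la) *s a" "(B ** B) *v v = (lv * lv) *s v"
    using la lv by (simp_all flip: matrix_vector_mul_assoc)
  then have "c *s a = (la * la) *s a" "c *s v = (lv * lv) *s v"
    using c by (simp_all add: msmult_matrix_vector_mult)
  then have "la * la = lv * lv"
    using vector_smult_right_cancel a0 vertex_nz by metis
  then have "(lv - la) * (lv + la) = 0" by (simp add: algebra_simps)
  moreover have "la \<noteq> 0" using la matrix_vector_mult_nz[OF B(2) a0] by auto
  moreover have "lv \<noteq> la"
  proof
    assume "lv = la"
    then have "B = msmult la (mat 1)"
      by (intro matrix_eq_on_basis[OF det_vertex_frame])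
        (simp_all add: msmult_matrix_vector_mult la lb lab lv)
    then show False using gB \<open>la \<noteq> 0\<close> by (simp add: central_involution_def mcls_msmult)
  qed
  ultimately have "lv = - la" by (simp add: eq_neg_iff_add_eq_0)
  then show ?thesis using that B(1) la lb lab lv \<open>la \<noteq> 0\<close> by simp
qed

lemma alpha_vertex:
  assumes K: "K *v a = a" "K *v b = b" "K *v v = - v"
  shows "alpha M (pcls v) = mcls K"
proof -
  have unique: "g = mcls K" if g: "central_involution M g (pcls v)" for g
  proof -
    obtain B l where B: "g = mcls B" "l \<noteq> 0" "B *v a = l *s a" "B *v b = l *s b" "B *v v = (- l) *s v"
      by (rule central_involution_vertex_matrix[OF g])
    have "B = msmult l K"
      by (rule matrix_eq_on_basis[OF det_vertex_frame]) (simp_all add: msmult_matrix_vector_mult B K)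
    then show ?thesis using B(1,2) by (simp add: mcls_msmult)
  qed
  have "central_involution M (mcls (reflection M v)) (pcls v)"
    using reflection_central_involution[OF _ a0 _ vertex_nz] vertex_nz av vv two_nz k0
    by (simp add: bform_commute[of v a])
  then have "central_involution M (mcls K) (pcls v)" using unique by metis
  then show ?thesis unfolding alpha_eq_The using unique by (rule the_equality)
qed

end

lemma tangent_triangle_contact_points:
  assumes "tangent M t1" "tangent M t2" "tangent M t3" "t1 \<noteq> t2" "t2 \<noteq> t3" "t1 \<noteq> t3"
  obtains a b c k where "a \<noteq> 0" "b \<noteq> 0" "c \<noteq> 0"
    "bform M a a = 0" "bform M b b = 0" "bform M c c = 0"
    "bform M a b = k" "bform M a c = k" "bform M b c = k" "k \<noteq> 0"
    "t1 = pcls (M *v a)" "t2 = pcls (M *v b)" "t3 = pcls (M *v c)"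
    "polar_tangent M a" "polar_tangent M b" "polar_tangent M c"
proof -
  obtain a b0 c0 where a: "a \<noteq> 0" "bform M a a = 0" "t1 = pcls (M *v a)" "polar_tangent M a"
    and b: "b0 \<noteq> 0" "bform M b0 b0 = 0" "t2 = pcls (M *v b0)" "polar_tangent M b0"
    and c: "c0 \<noteq> 0" "bform M c0 c0 = 0" "t3 = pcls (M *v c0)" "polar_tangent M c0"
    using tangent_eq_polar assms(1-3) by metis
  have nab: "bform M a b0 \<noteq> 0" using polar_tangent_bform_nz[OF a(1) b(1,2) a(4)] a(3) b(3) assms(4) by simp
  have nac: "bform M a c0 \<noteq> 0" using polar_tangent_bform_nz[OF a(1) c(1,2) a(4)] a(3) c(3) assms(6) by simp
  have nbc: "bform M b0 c0 \<noteq> 0" using polar_tangent_bform_nz[OF b(1) c(1,2) b(4)] b(3) c(3) assms(5) by simp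
  define mu where "mu = bform M a c0 / bform M b0 c0"
  define nu where "nu = bform M a b0 / bform M b0 c0"
  have mu0: "mu \<noteq> 0" and nu0: "nu \<noteq> 0" using nab nac nbc by (simp_all add: mu_def nu_def)
  show ?thesis
  proof (rule that[of a "mu *s b0" "nu *s c0" "mu * bform M a b0"])
    show "bform M a (nu *s c0) = mu * bform M a b0" "bform M (mu *s b0) (nu *s c0) = mu * bform M a b0"
      using nbc by (simp_all add: mu_def nu_def field_simps)
    show "t2 = pcls (M *v (mu *s b0))" "t3 = pcls (M *v (nu *s c0))"
      using b(3) c(3) mu0 nu0 by (simp_all add: pcls_smult)
    show "polar_tangent M (mu *s b0)" "polar_tangent M (nu *s c0)"
      using polar_tangent_smult mu0 nu0 b(4) c(4) by auto
  qed (use a b c mu0 nu0 nab in auto)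
qed

lemma tangent_triangle_vertex:
  assumes "b \<noteq> 0" "bform M a a = 0" "bform M b b = 0" "bform M c c = 0"
    "bform M a b = k" "bform M a c = k" "bform M b c = k" "k \<noteq> 0"
    and P: "P \<in> pg_points" "on_line P (pcls (M *v a))" "on_line P (pcls (M *v b))"
  shows "P = pcls (a + b - c)" "bform M a (a + b - c) = 0" "bform M b (a + b - c) = 0"
    "bform M (a + b - c) (a + b - c) = - 2 * k"
proof -
  show forms: "bform M a (a + b - c) = 0" "bform M b (a + b - c) = 0"
    "bform M (a + b - c) (a + b - c) = - 2 * k"
    using assms(2-7) by (simp_all add: bform_commute[of b a] bform_commute[of c a] bform_commute[of c b])
  then have "a + b - c \<noteq> 0" using two_nz assms(8) by auto
  then show "P = pcls (a + b - c)"
    using point_on_two_polars[OF P polar_cross_nz[OF assms(1,3)] _ forms(1,2)] assms(5,8) by simp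
qed

end

section \<open>The tangent triangle\<close>

text \<open>In the frame \<open>(a, a + b - c, b)\<close> the Veronese images of \<open>(1, 0)\<close>, \<open>(0, 1)\<close> and \<open>(1, -1)\<close>
  are the contact points \<open>a\<close>, \<open>b\<close>, \<open>c\<close>, and the vertices of the triangle are
  \<open>a + b - c\<close>, \<open>b + c - a\<close>, \<open>a + c - b\<close>.\<close>

lemma (in prime_subfield) tangent_triangle_involutions:
  fixes M :: "'a^3^3"
  assumes two: "(2::'a) \<noteq> 0" and nd: "nondeg_conic_matrix M"
    and "tangent M t1" "tangent M t2" "tangent M t3" "t1 \<noteq> t2" "t2 \<noteq> t3" "t1 \<noteq> t3"
    and P: "P \<in> pg_points" "on_line P t1" "on_line P t2"
    and Q: "Q \<in> pg_points" "on_line Q t2" "on_line Q t3"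
    and R: "R \<in> pg_points" "on_line R t1" "on_line R t3"
  obtains Cm where "det Cm \<noteq> 0"
    "{alpha M P, alpha M Q, alpha M R} = pgl2_embedding Cm ` (triangle_gens :: ('b^2^2) set set)"
proof -
  interpret nondeg_conic M using nd two by unfold_locales
  obtain a b c k where cf: "a \<noteq> 0" "b \<noteq> 0" "c \<noteq> 0" "bform M a a = 0" "bform M b b = 0"
    "bform M c c = 0" "bform M a b = k" "bform M a c = k" "bform M b c = k" "k \<noteq> 0"
    "t1 = pcls (M *v a)" "t2 = pcls (M *v b)" "t3 = pcls (M *v c)"
    "polar_tangent M a" "polar_tangent M b" "polar_tangent M c"
    using tangent_triangle_contact_points assms(3-8) by blast
  have sym: "bform M b a = k" "bform M c a = k" "bform M c b = k" using cf bform_commute by metis+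
  define vP where "vP = a + b - c"
  define vQ where "vQ = b + c - a"
  define vR where "vR = a + c - b"
  define Cm where "Cm = col3 a vP b"
  note vertexP = tangent_triangle_vertex[OF cf(2,4,5,6,7,8,9,10) P[unfolded cf(11,12)], folded vP_def]
  note vertexQ = tangent_triangle_vertex[OF cf(3,5,6,4,9) sym(1,2) cf(10) Q[unfolded cf(12,13)],
      folded vQ_def]
  note vertexR = tangent_triangle_vertex[OF cf(3,4,6,5,8,7) sym(3) cf(10) R[unfolded cf(11,13)],
      folded vR_def]
  have det_Cm: "det Cm \<noteq> 0"
    unfolding Cm_def by (rule det_col3_nz_of_gram[of M])
      (use two cf sym vertexP in \<open>simp add: mat3_det bform_commute[of vP a] bform_commute[of vP b]\<close>)
  have coords: "a = Cm *v vector [1, 0, 0]" "b = Cm *v vector [0, 0, 1]" "c = Cm *v vector [1, -1, 1]"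
    "vP = Cm *v vector [0, 1, 0]" "- vP = Cm *v vector [0, -1, 0]"
    "vQ = Cm *v vector [0, -1, 2]" "- vQ = Cm *v vector [0, 1, -2]"
    "vR = Cm *v vector [2, -1, 0]" "- vR = Cm *v vector [-2, 1, 0]"
    by (simp_all add: Cm_def col3_matrix_vector_mult vP_def vQ_def vR_def vec_eq_iff algebra_simps)
  have image: "sym_conj Cm A *v x = y"
    if "x = Cm *v w" "y = Cm *v w'" "sym_square (emb_mat2 A) *v w = w'" for A :: "'b^2^2" and x y w w'
    by (simp only: that(1,2) sym_conj_apply[OF det_Cm] that(3))
  have "alpha M (pcls vP) = mcls (sym_conj Cm (inv_P :: 'b^2^2))"
    by (rule alpha_vertex[OF cf(1,2,4,5,7,10) vertexP(2-4) cf(14,15)])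
      (rule image[OF coords(1,1)] image[OF coords(2,2)] image[OF coords(4,5)],
        simp add: sym_square_mat2 mat3_matrix_vector_mult)+
  moreover have "alpha M (pcls vQ) = mcls (sym_conj Cm (inv_Q :: 'b^2^2))"
    by (rule alpha_vertex[OF cf(2,3,5,6,9,10) vertexQ(2-4) cf(15,16)])
      (rule image[OF coords(2,2)] image[OF coords(3,3)] image[OF coords(6,7)],
        simp add: sym_square_mat2 mat3_matrix_vector_mult)+
  moreover have "alpha M (pcls vR) = mcls (sym_conj Cm (inv_R :: 'b^2^2))"
    by (rule alpha_vertex[OF cf(1,3,4,6,8,10) vertexR(2-4) cf(14,16)])
      (rule image[OF coords(1,1)] image[OF coords(3,3)] image[OF coords(8,9)],
        simp add: sym_square_mat2 mat3_matrix_vector_mult)+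
  ultimately show ?thesis
    using that det_Cm vertexP(1) vertexQ(1) vertexR(1)
    by (simp add: triangle_gens_def pgl2_embedding_mcls[OF det_Cm])
qed

theorem mainTheorem10:
  fixes M :: "'a::{field,finite}^3^3"
    and p n :: nat
    and t1 t2 t3 P Q R :: "('a^3) set"
  assumes "prime p" and "odd p" and "n \<ge> 1" and "CARD('a) = p ^ n"
    and "nondeg_conic_matrix M"
    and "tangent M t1" and "tangent M t2" and "tangent M t3"
    and "t1 \<noteq> t2" and "t2 \<noteq> t3" and "t1 \<noteq> t3"
    and "P \<in> pg_points" and "on_line P t1" and "on_line P t2"
    and "Q \<in> pg_points" and "on_line Q t2" and "on_line Q t3"
    and "R \<in> pg_points" and "on_line R t1" and "on_line R t3"
    and "CARD('b::{field,finite}) = p"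
  shows "(p mod 4 = 1 \<longrightarrow>
            (pgl \<lparr> carrier := generate pgl {alpha M P, alpha M Q, alpha M R} \<rparr>)
              \<cong> (psl :: ('b^2^2) set monoid))
       \<and> (p mod 4 = 3 \<longrightarrow>
            (pgl \<lparr> carrier := generate pgl {alpha M P, alpha M Q, alpha M R} \<rparr>)
              \<cong> (pgl :: ('b^2^2) set monoid))"
proof -
  have "CHAR('a) = p" using CHAR_eq_of_card_prime_power assms(1,4) .
  then interpret prime_subfield p "TYPE('a)" "TYPE('b)"
    using assms(21) by unfold_locales
  have "(2::'a) \<noteq> 0" using two_neq_zero_if_odd_CHAR[where 'a='a] CHAR_a assms(2) by simp
  then obtain Cm where Cm: "det Cm \<noteq> 0"
    and alphas: "{alpha M P, alpha M Q, alpha M R} = pgl2_embedding Cm ` (triangle_gens :: ('b^2^2) set set)"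
    using tangent_triangle_involutions assms(5-20) by blast
  have "group_hom (pgl :: ('b^2^2) set monoid) (pgl :: ('a^3^3) set monoid) (pgl2_embedding Cm)"
    by (simp add: group_hom_def group_hom_axioms_def group_pgl pgl2_embedding_hom[OF Cm])
  then have generated: "generate pgl {alpha M P, alpha M Q, alpha M R} =
      pgl2_embedding Cm ` generate pgl (triangle_gens :: ('b^2^2) set set)"
    unfolding alphas by (rule group_hom.generate_img[OF _ triangle_gens_subset_pgl])
  have "(-2::'b) \<noteq> 0" using two_neq_zero_if_odd_CHAR[where 'a='b] CHAR_b assms(2) by simp
  then have multiples: "\<exists>k::nat. t = of_nat k * (-2)" for t :: 'b
    by (rule prime_field_nat_multiple[OF prime_p card_b])
  show ?thesis
  proof (intro conjI impI)
    assume "p mod 4 = 1"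
    then obtain i :: 'b where "i * i = -1" using prime_field_minus_one_square[OF prime_p card_b] by blast
    then show "pgl\<lparr>carrier := generate pgl {alpha M P, alpha M Q, alpha M R}\<rparr> \<cong> (psl :: ('b^2^2) set monoid)"
      using pgl2_embedding_subgroup_iso[OF Cm subgroup_psl] generate_triangle_gens_eq_psl[OF multiples]
        generated by (simp add: psl_def)
  next
    assume "p mod 4 = 3"
    then have "generate pgl (triangle_gens :: ('b^2^2) set set) = carrier pgl"
      using generate_triangle_gens_eq_pgl[OF multiples] prime_field_square_or_minus_square[OF prime_p card_b]
      by blast
    then show "pgl\<lparr>carrier := generate pgl {alpha M P, alpha M Q, alpha M R}\<rparr> \<cong> (pgl :: ('b^2^2) set monoid)"
      using pgl2_embedding_subgroup_iso[OF Cm group.subgroup_self[OF group_pgl]] generated by simp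
  qed
qed

end
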